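(* Let $E$ be a vector lattice, and suppose that the order continuous dual $E^\sim_n$ has an ideal $I$ that separates the points of $E$. Suppose that $C_{\mathrm{u}|\sigma|(E,I)}=E$ or, equivalently, that $E$ has the countable sup property (this holds in particular when $C_{\mathrm{u}|\sigma|(E,I)}$ has a countable order basis, or when $\mathrm{u}|\sigma|(E,I)$ is metrisable). Let $S$ be a convex subset of $E$ and let $x$ belong to the $\sigma(E,I)$-closure of $S$. Then there exists a sequence in $S$ that is uo-convergent to $x$.
   Context: All vector lattices are real and Archimedean. $E^\sim_n$ is the order continuous dual of $E$. $\sigma(E,I)$ is the weak topology on $E$ induced by $I$. The absolute weak topology $|\sigma|(E,I)$ is the locally convex locally solid topology generated by the lattice seminorms $p_\varphi(x)=|\varphi|(|x|)$, $\varphi\in I$. For a locally solid topology $\tau$ on $E$, $\mathrm{u}\tau$ is the locally solid topology with neighbourhood basis at zero the sets $\{x\in E: |x|\wedge|y|\in V\}$, with $V$ ranging over solid $\tau$-neighbourhoods of zero and $y$ over $E$. A sequence $(V_n)$ of neighbourhoods of zero is normal if $V_{n+1}+V_{n+1}\subseteq V_n$; the carrier $C_\tau$ is the union of the disjoint complements $N^{\mathrm d}$ where $N=\bigcap_nV_n$ ranges over intersections of normal sequences of solid $\tau$-neighbourhoods of zero. Order basis: non-empty $A$ with $A^{\mathrm d}=\{0\}$. Countable sup property: every subset with a supremum contains an at most countable subset with the same supremum. Uo-convergence: $|x_n-x|\wedge|y|\to0$ in order for all $y\in E$, where order convergence of a net means there is a net $y_\beta\downarrow0$ such that for each $\beta_0$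 eventually $|x_\alpha-x|\leq y_{\beta_0}$. *)

theory Defs
  imports "HOL-Analysis.Analysis"
begin

class vector_lattice = ordered_real_vector + lattice +
  assumes archimedean:
    "0 \<le> x \<Longrightarrow> (\<And>n::nat. real n *\<^sub>R x \<le> y) \<Longrightarrow> x = 0"


definition vabs :: "'a::vector_lattice \<Rightarrow> 'a" where
  "vabs x = sup x (- x)"

definition is_lub :: "'a::vector_lattice set \<Rightarrow> 'a \<Rightarrow> bool" where
  "is_lub A s \<longleftrightarrow> (\<forall>a\<in>A. a \<le> s) \<and> (\<forall>u. (\<forall>a\<in>A. a \<le> u) \<longrightarrow> s \<le> u)"

definition is_glb :: "'a::vector_lattice set \<Rightarrow> 'a \<Rightarrow> bool" where
  "is_glb A s \<longleftrightarrow> (\<forall>a\<in>A. s \<le> a) \<and> (\<forall>u. (\<forall>a\<in>A. u \<le> a) \<longrightarrow> u \<le> s)"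

text \<open>A downward directed set with infimum 0; such a set, indexed by itself,
  is a net decreasing to 0 (and the range of every net \<open>y\<^sub>\<beta> \<down> 0\<close> is such a set).\<close>
definition down_to_zero :: "'a::vector_lattice set \<Rightarrow> bool" where
  "down_to_zero D \<longleftrightarrow> D \<noteq> {} \<and> (\<forall>a\<in>D. \<forall>b\<in>D. \<exists>c\<in>D. c \<le> a \<and> c \<le> b) \<and> is_glb D 0"

definition order_conv :: "(nat \<Rightarrow> 'a::vector_lattice) \<Rightarrow> 'a \<Rightarrow> bool" where
  "order_conv z x \<longleftrightarrow> (\<exists>D. down_to_zero D \<and>
      (\<forall>d\<in>D. \<exists>N. \<forall>n\<ge>N. vabs (z n - x) \<le> d))"

definition uo_conv :: "(nat \<Rightarrow> 'a::vector_lattice) \<Rightarrow> 'a \<Rightarrow> bool" where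
  "uo_conv z x \<longleftrightarrow> (\<forall>y. order_conv (\<lambda>n. inf (vabs (z n - x)) (vabs y)) 0)"

definition countable_sup_property :: "'a::vector_lattice itself \<Rightarrow> bool" where
  "countable_sup_property _ \<longleftrightarrow> (\<forall>(A::'a set) s. is_lub A s \<longrightarrow> (\<exists>B\<subseteq>A. countable B \<and> is_lub B s))"

definition order_dual :: "('a::vector_lattice \<Rightarrow> real) set" where
  "order_dual = {\<phi>. linear \<phi> \<and>
      (\<forall>a. 0 \<le> a \<longrightarrow> (\<exists>M. \<forall>y. vabs y \<le> a \<longrightarrow> \<bar>\<phi> y\<bar> \<le> M))}"

definition oc_dual :: "('a::vector_lattice \<Rightarrow> real) set" where
  "oc_dual = {\<phi>\<in>order_dual. \<forall>D. down_to_zero D \<longrightarrow>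
      (\<forall>\<epsilon>>0. \<exists>d\<in>D. \<bar>\<phi> d\<bar> < \<epsilon>)}"

text \<open>Modulus of a regular functional (Riesz--Kantorovich), on positive elements.\<close>
definition fabs :: "('a::vector_lattice \<Rightarrow> real) \<Rightarrow> 'a \<Rightarrow> real" where
  "fabs \<phi> x = Sup {\<phi> y | y. vabs y \<le> x}"

definition ideal_of_oc_dual :: "('a::vector_lattice \<Rightarrow> real) set \<Rightarrow> bool" where
  "ideal_of_oc_dual I \<longleftrightarrow> I \<subseteq> oc_dual \<and> (\<lambda>_. 0) \<in> I \<and>
     (\<forall>\<phi>\<in>I. \<forall>\<psi>\<in>I. (\<lambda>x. \<phi> x + \<psi> x) \<in> I) \<and>
     (\<forall>\<phi>\<in>I. \<forall>c::real. (\<lambda>x. c * \<phi> x) \<in> I) \<and>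
     (\<forall>\<psi>\<in>I. \<forall>\<phi>\<in>oc_dual. (\<forall>x. 0 \<le> x \<longrightarrow> fabs \<phi> x \<le> fabs \<psi> x) \<longrightarrow> \<phi> \<in> I)"

definition separates_points :: "('a::vector_lattice \<Rightarrow> real) set \<Rightarrow> bool" where
  "separates_points I \<longleftrightarrow> (\<forall>x. x \<noteq> 0 \<longrightarrow> (\<exists>\<phi>\<in>I. \<phi> x \<noteq> 0))"

text \<open>Closure of S in the weak topology \<open>\<sigma>(E,I)\<close>, via its basic neighbourhoods.\<close>
definition weak_closure :: "('a::vector_lattice \<Rightarrow> real) set \<Rightarrow> 'a set \<Rightarrow> 'a set" where
  "weak_closure I S = {x. \<forall>F. finite F \<and> F \<subseteq> I \<longrightarrow>
      (\<forall>\<epsilon>>0. \<exists>s\<in>S. \<forall>\<phi>\<in>F. \<bar>\<phi> s - \<phi> x\<bar> < \<epsilon>)}"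

end

theory Submission
  imports Defs "HOL-Library.Lattice_Algebras"
begin

(* For convex S, a Mazur-Orlicz separation argument together with the solidity of I shows that
   the sigma(E,I)-closure of S lies in its |sigma|(E,I)-closure: for every positive phi in I there
   are s in S with phi |s - x| arbitrarily small. By the countable sup property, every positive
   element is covered by the carriers of countably many positive functionals in I. Choose s_n
   inductively so that phi_kj |s_n - x| < 2^-n for k, j < n, where the phi_kj cover |s_k - x|.
   A lower bound of the tails of inf(|s_n - x|, |y|) is then annihilated by every phi_kj (order
   continuity and summability of 2^-n), hence disjoint from every |s_k - x|, hence zero; so
   s_n converges to x in the uo sense. *)

context vector_lattice begin
subclass lattice_ab_group_add ..
end

section \<open>Vector lattice arithmetic\<close>

lemma vabs_ge: "(x::'a::vector_lattice) \<le> vabs x" "- x \<le> vabs x"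
  unfolding vabs_def by auto

lemma vabs_le_iff: "vabs (x::'a::vector_lattice) \<le> a \<longleftrightarrow> x \<le> a \<and> - x \<le> a"
  unfolding vabs_def by auto

lemma vabs_nonneg: "0 \<le> vabs (x::'a::vector_lattice)"
proof -
  have "x + - x \<le> vabs x + vabs x"
    using vabs_ge by (rule add_mono)
  then show ?thesis by simp
qed

lemma vabs_of_nonneg: "0 \<le> (x::'a::vector_lattice) \<Longrightarrow> vabs x = x"
  unfolding vabs_def by (meson dual_order.trans neg_le_0_iff_le sup.absorb1)

lemma vabs_minus: "vabs (- (x::'a::vector_lattice)) = vabs x"
  unfolding vabs_def by (simp add: sup.commute)

lemma vabs_triangle: "vabs ((x::'a::vector_lattice) + y) \<le> vabs x + vabs y"
  unfolding vabs_le_iff using vabs_ge[of x] vabs_ge[of y]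
  by (metis add_mono minus_add_distrib add.commute)

lemma scaleR_sup:
  assumes "0 \<le> c"
  shows "c *\<^sub>R sup a b = sup (c *\<^sub>R a) (c *\<^sub>R (b::'a::vector_lattice))"
proof (cases "c = 0")
  case False
  with assms have c: "0 < c" by simp
  define m where "m = sup (c *\<^sub>R a) (c *\<^sub>R b)"
  have "inverse c *\<^sub>R (c *\<^sub>R y) \<le> inverse c *\<^sub>R m" if "y = a \<or> y = b" for y
    unfolding m_def using c that by (intro scaleR_left_mono) auto
  then have "sup a b \<le> inverse c *\<^sub>R m" using c by simp
  then have "c *\<^sub>R sup a b \<le> c *\<^sub>R (inverse c *\<^sub>R m)"
    using c by (intro scaleR_left_mono) auto
  then have "c *\<^sub>R sup a b \<le> m" using c by simp
  moreover have "m \<le> c *\<^sub>R sup a b"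
    unfolding m_def using assms by (simp add: scaleR_left_mono)
  ultimately show ?thesis unfolding m_def by (rule antisym)
qed simp

lemma vabs_scaleR: "vabs (c *\<^sub>R (x::'a::vector_lattice)) = \<bar>c\<bar> *\<^sub>R vabs x"
proof (cases "0 \<le> c")
  case True
  then show ?thesis unfolding vabs_def using scaleR_sup[OF True, of x "-x"] by simp
next
  case False
  then have "(-c) *\<^sub>R vabs x = vabs (c *\<^sub>R x)"
    unfolding vabs_def using scaleR_sup[of "-c" x "-x"] by (simp add: sup.commute)
  then show ?thesis using False by simp
qed

lemma sup_le_add_nonneg:
  assumes "0 \<le> (a::'a::vector_lattice)" "0 \<le> b"
  shows "sup a b \<le> a + b"
proof (rule sup_least)
  show "a \<le> a + b" using assms(2) by simp
  show "b \<le> a + b" using assms(1) by simp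
qed

lemma pos_minus_neg_part: "sup x 0 - sup (- x) 0 = (x::'a::vector_lattice)"
proof -
  have "x + 0 = sup x 0 + inf x 0" by (rule add_eq_inf_sup)
  moreover have "inf x 0 = - sup (- x) 0" by (subst inf_eq_neg_sup) simp
  ultimately show ?thesis by (metis add.right_neutral diff_conv_add_uminus)
qed

lemma riesz_decomposition:
  assumes "u \<le> a + b" and "0 \<le> b"
  shows "u - inf u a \<le> (b::'a::vector_lattice)"
proof -
  have "u - inf u a = sup 0 (u - a)"
    by (simp add: diff_inf_eq_sup add_sup_distrib_left)
  also have "\<dots> \<le> b" using assms by (simp add: diff_le_eq add.commute)
  finally show ?thesis .
qed

lemma inf_add_le:
  assumes "0 \<le> (b::'a::vector_lattice)" "0 \<le> y" "0 \<le> z"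
  shows "inf b (y + z) \<le> inf b y + inf b z"
proof -
  define w where "w = inf b (y + z)"
  have "w - inf b y = sup (w - b) (w - y)"
    by (simp add: diff_inf_eq_sup add_sup_distrib_left)
  also have "\<dots> \<le> inf b z"
  proof (rule sup_least)
    have "w - b \<le> 0" unfolding w_def by simp
    also have "0 \<le> inf b z" using assms by simp
    finally show "w - b \<le> inf b z" .
    have "w - y \<le> z" unfolding w_def by (simp add: diff_le_eq add.commute le_infI2)
    moreover have "w - y \<le> b" unfolding w_def using assms(2)
      by (metis diff_le_eq inf.coboundedI1 le_add_same_cancel1)
    ultimately show "w - y \<le> inf b z" by simp
  qed
  finally have "w \<le> inf b z + inf b y" by (simp only: diff_le_eq)
  then show ?thesis unfolding w_def by (simp add: add.commute)
qed

lemma disjoint_add_eq_sup: "inf (b::'a::vector_lattice) c = 0 \<Longrightarrow> b + c = sup b c"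
  using add_eq_inf_sup[of b c] by simp

lemma disjoint_scaleR_of_nat:
  assumes "0 \<le> (b::'a::vector_lattice)" "0 \<le> y" "inf b y = 0"
  shows "inf b (of_nat k *\<^sub>R y) = 0"
proof (induction k)
  case (Suc k)
  have "inf b (of_nat k *\<^sub>R y + y) \<le> inf b (of_nat k *\<^sub>R y) + inf b y"
    using assms by (intro inf_add_le) (auto simp: scaleR_nonneg_nonneg)
  then have "inf b (of_nat (Suc k) *\<^sub>R y) \<le> 0" using Suc assms by (simp add: algebra_simps)
  moreover have "0 \<le> inf b (of_nat (Suc k) *\<^sub>R y)"
    using assms by (simp del: of_nat_Suc add: scaleR_nonneg_nonneg)
  ultimately show ?case by (rule antisym)
qed (simp add: inf_absorb2 assms)

lemma nonneg_zero_if_multiples_bounded: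
  "0 \<le> (h::'a::vector_lattice) \<Longrightarrow> (\<And>k::nat. of_nat k *\<^sub>R h \<le> w) \<Longrightarrow> h = 0"
  using archimedean[of h w] by simp

section \<open>Sublinear functionals and the Hahn--Banach theorem\<close>

definition sublinear :: "('a::real_vector \<Rightarrow> real) \<Rightarrow> bool" where
  "sublinear q \<longleftrightarrow> (\<forall>x y. q (x + y) \<le> q x + q y) \<and> (\<forall>c x. 0 < c \<longrightarrow> q (c *\<^sub>R x) = c * q x)"

lemma sublinear_add: "sublinear q \<Longrightarrow> q (x + y) \<le> q x + q y"
  unfolding sublinear_def by blast

lemma sublinear_zero: "sublinear q \<Longrightarrow> q 0 = 0"
proof -
  assume "sublinear q"
  then have "q ((2::real) *\<^sub>R 0) = 2 * q 0" unfolding sublinear_def by (meson zero_less_numeral)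
  then show ?thesis by simp
qed

lemma sublinear_scaleR: "sublinear q \<Longrightarrow> 0 \<le> c \<Longrightarrow> q (c *\<^sub>R x) = c * q x"
  using sublinear_zero[of q] unfolding sublinear_def by (cases "c = 0") auto

lemma sublinear_minus_le: "sublinear q \<Longrightarrow> - q (- x) \<le> q x"
  using sublinear_add[of q x "- x"] sublinear_zero[of q] by simp

definition mazur_orlicz_functional :: "('a::real_vector \<Rightarrow> real) \<Rightarrow> 'a set \<Rightarrow> real \<Rightarrow> 'a \<Rightarrow> real"
  where "mazur_orlicz_functional P A \<alpha> y = (INF p\<in>A \<times> {0..}. P (y + snd p *\<^sub>R fst p) - snd p * \<alpha>)"

context
  fixes P :: "'a::real_vector \<Rightarrow> real" and A :: "'a set" and \<alpha> :: real
  assumes P: "sublinear P" and lower: "\<forall>a\<in>A. \<alpha> \<le> P a"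
begin

lemma mazur_orlicz_functional_le:
  assumes "a \<in> A" "0 \<le> l"
  shows "mazur_orlicz_functional P A \<alpha> y \<le> P (y + l *\<^sub>R a) - l * \<alpha>"
proof -
  have "- P (- y) \<le> P (y + snd p *\<^sub>R fst p) - snd p * \<alpha>" if p: "p \<in> A \<times> {0..}" for p
  proof -
    obtain a' l' where p: "p = (a', l')" "a' \<in> A" "0 \<le> l'" using p by (cases p) auto
    have "l' * \<alpha> \<le> l' * P a'" using lower p(2,3) by (simp add: mult_left_mono)
    also have "\<dots> = P (l' *\<^sub>R a')" using sublinear_scaleR[OF P p(3)] by simp
    also have "\<dots> \<le> P (y + l' *\<^sub>R a') + P (- y)"
      using sublinear_add[OF P, of "y + l' *\<^sub>R a'" "- y"] by simp
    finally show ?thesis using p(1) by simp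
  qed
  then have bdd: "bdd_below ((\<lambda>p. P (y + snd p *\<^sub>R fst p) - snd p * \<alpha>) ` (A \<times> {0..}))"
    by (intro bdd_belowI2)
  show ?thesis
    using cINF_lower[OF bdd, of "(a, l)"] assms unfolding mazur_orlicz_functional_def by simp
qed

lemma mazur_orlicz_functional_greatest:
  assumes "A \<noteq> {}" and "\<And>a l. a \<in> A \<Longrightarrow> 0 \<le> l \<Longrightarrow> c \<le> P (y + l *\<^sub>R a) - l * \<alpha>"
  shows "c \<le> mazur_orlicz_functional P A \<alpha> y"
  unfolding mazur_orlicz_functional_def using assms by (intro cINF_greatest) auto

lemma mazur_orlicz_functional_le_add:
  assumes A: "convex A" and a1: "a1 \<in> A" "0 \<le> l1" and a2: "a2 \<in> A" "0 \<le> l2"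
  shows "mazur_orlicz_functional P A \<alpha> (x + y)
    \<le> (P (x + l1 *\<^sub>R a1) - l1 * \<alpha>) + (P (y + l2 *\<^sub>R a2) - l2 * \<alpha>)"
proof (cases "l1 + l2 = 0")
  case True
  then have "l1 = 0" "l2 = 0" using a1(2) a2(2) by auto
  then show ?thesis
    using mazur_orlicz_functional_le[OF a1(1), of 0 "x + y"] sublinear_add[OF P, of x y] by simp
next
  case False
  define L where "L = l1 + l2"
  have L: "0 < L" using False a1(2) a2(2) unfolding L_def by simp
  \<comment> \<open>merge the two directions into one by convexity\<close>
  define a where "a = (l1 / L) *\<^sub>R a1 + (l2 / L) *\<^sub>R a2"
  have "a \<in> A" unfolding a_def using A a1 a2 L
    unfolding convex_def by (auto simp: add_divide_distrib[symmetric] L_def)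
  moreover have "L *\<^sub>R a = l1 *\<^sub>R a1 + l2 *\<^sub>R a2"
    unfolding a_def using L by (simp add: scaleR_add_right)
  ultimately have "mazur_orlicz_functional P A \<alpha> (x + y)
      \<le> P ((x + l1 *\<^sub>R a1) + (y + l2 *\<^sub>R a2)) - (l1 + l2) * \<alpha>"
    using mazur_orlicz_functional_le[of a L "x + y"] L by (simp add: algebra_simps L_def)
  also have "\<dots> \<le> (P (x + l1 *\<^sub>R a1) - l1 * \<alpha>) + (P (y + l2 *\<^sub>R a2) - l2 * \<alpha>)"
    using sublinear_add[OF P, of "x + l1 *\<^sub>R a1" "y + l2 *\<^sub>R a2"] by (simp add: algebra_simps)
  finally show ?thesis .
qed

lemma mazur_orlicz_functional_scaleR:
  assumes "A \<noteq> {}" and c: "0 < c"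
  shows "mazur_orlicz_functional P A \<alpha> (c *\<^sub>R x) = c * mazur_orlicz_functional P A \<alpha> x"
proof -
  let ?q = "mazur_orlicz_functional P A \<alpha>"
  have scale: "P (c *\<^sub>R x + (c * l) *\<^sub>R a) - (c * l) * \<alpha> = c * (P (x + l *\<^sub>R a) - l * \<alpha>)" for a l
    using sublinear_scaleR[OF P, of c "x + l *\<^sub>R a"] c by (simp add: algebra_simps)
  have "?q (c *\<^sub>R x) / c \<le> ?q x"
  proof (rule mazur_orlicz_functional_greatest[OF \<open>A \<noteq> {}\<close>])
    fix a and l :: real assume "a \<in> A" "0 \<le> l"
    then have "?q (c *\<^sub>R x) \<le> c * (P (x + l *\<^sub>R a) - l * \<alpha>)"
      using mazur_orlicz_functional_le[of a "c * l" "c *\<^sub>R x"] c scale by simp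
    then show "?q (c *\<^sub>R x) / c \<le> P (x + l *\<^sub>R a) - l * \<alpha>" using c by (simp add: divide_le_eq mult.commute)
  qed
  moreover have "c * ?q x \<le> ?q (c *\<^sub>R x)"
  proof (rule mazur_orlicz_functional_greatest[OF \<open>A \<noteq> {}\<close>])
    fix a and l :: real assume "a \<in> A" "0 \<le> l"
    then have "c * ?q x \<le> c * (P (x + (l / c) *\<^sub>R a) - (l / c) * \<alpha>)"
      using mazur_orlicz_functional_le[of a "l / c" x] c by simp
    also have "\<dots> = P (c *\<^sub>R x + l *\<^sub>R a) - l * \<alpha>" using scale[of "l / c"] c by simp
    finally show "c * ?q x \<le> P (c *\<^sub>R x + l *\<^sub>R a) - l * \<alpha>" .
  qed
  ultimately show ?thesis using c by (simp add: divide_le_eq mult.commute)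
qed

lemma sublinear_mazur_orlicz_functional:
  assumes A: "convex A" "A \<noteq> {}"
  shows "sublinear (mazur_orlicz_functional P A \<alpha>)"
proof -
  let ?q = "mazur_orlicz_functional P A \<alpha>"
  have "?q (x + y) - ?q y \<le> ?q x" for x y
  proof (rule mazur_orlicz_functional_greatest[OF A(2)])
    fix a1 and l1 :: real assume "a1 \<in> A" "0 \<le> l1"
    have "?q (x + y) - (P (x + l1 *\<^sub>R a1) - l1 * \<alpha>) \<le> ?q y"
      using mazur_orlicz_functional_le_add[OF A(1) \<open>a1 \<in> A\<close> \<open>0 \<le> l1\<close>]
      by (intro mazur_orlicz_functional_greatest[OF A(2)]) (simp add: algebra_simps)
    then show "?q (x + y) - ?q y \<le> P (x + l1 *\<^sub>R a1) - l1 * \<alpha>" by simp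
  qed
  then show ?thesis
    unfolding sublinear_def using mazur_orlicz_functional_scaleR[OF A(2)] by (simp add: algebra_simps)
qed

end

lemma minimal_sublinear_linear:
  fixes r :: "'a::real_vector \<Rightarrow> real"
  assumes r: "sublinear r" and minimal: "\<And>r'. sublinear r' \<Longrightarrow> r' \<le> r \<Longrightarrow> r' = r"
  shows "linear r"
proof -
  have superadditive: "r y + r z \<le> r (y + z)" for y z
  proof -
    \<comment> \<open>the Mazur--Orlicz functional of \<open>r\<close> in the direction \<open>z\<close> is a sublinear minorant of \<open>r\<close>\<close>
    let ?h = "mazur_orlicz_functional r {z} (r z)"
    note h_le = mazur_orlicz_functional_le[OF r, of "{z}" "r z" z]
    have "?h \<le> r" using h_le[of 0] by (simp add: le_fun_def)
    moreover have "sublinear ?h" by (rule sublinear_mazur_orlicz_functional) (use r in auto)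
    ultimately have "?h = r" by (rule minimal[rotated])
    then show ?thesis using h_le[of 1 y] by simp
  qed
  have add: "r (y + z) = r y + r z" for y z
    using superadditive[of y z] sublinear_add[OF r, of y z] by simp
  have "r (c *\<^sub>R y) = c * r y" for c y
  proof (cases "0 \<le> c")
    case False
    have "r (c *\<^sub>R y) + r ((- c) *\<^sub>R y) = 0"
      using add[of "c *\<^sub>R y" "(- c) *\<^sub>R y"] sublinear_zero[OF r] by (simp add: scaleR_left_diff_distrib[symmetric])
    then show ?thesis using sublinear_scaleR[OF r, of "- c" y] False by simp
  qed (rule sublinear_scaleR[OF r])
  then show ?thesis using add by (intro linearI) simp_all
qed

context
  fixes q :: "'a::real_vector \<Rightarrow> real" and R :: "('a \<Rightarrow> real) set"
  assumes q: "sublinear q" and R: "\<And>r. r \<in> R \<Longrightarrow> sublinear r \<and> r \<le> q"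
    and chain: "\<And>r s. r \<in> R \<Longrightarrow> s \<in> R \<Longrightarrow> r \<le> s \<or> s \<le> r"
begin

lemma INF_chain_le: "r \<in> R \<Longrightarrow> (\<lambda>x. INF r\<in>R. r x) \<le> r"
proof -
  have "bdd_below ((\<lambda>r. r x) ` R)" for x
  proof (rule bdd_belowI2[where m = "- q (- x)"])
    fix r assume "r \<in> R"
    then have "- r (- x) \<le> r x" "r (- x) \<le> q (- x)"
      using R sublinear_minus_le by (auto simp: le_fun_def)
    then show "- q (- x) \<le> r x" by simp
  qed
  then show "r \<in> R \<Longrightarrow> (\<lambda>x. INF r\<in>R. r x) \<le> r" by (auto simp: le_fun_def intro: cINF_lower)
qed

lemma sublinear_INF_chain:
  assumes "R \<noteq> {}"
  shows "sublinear (\<lambda>x. INF r\<in>R. r x)"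
proof -
  define m where "m x = (INF r\<in>R. r x)" for x
  have m_le: "m x \<le> r x" if "r \<in> R" for r x
    using INF_chain_le[OF that] unfolding m_def le_fun_def by blast
  have m_ge: "c \<le> m x" if "\<And>r. r \<in> R \<Longrightarrow> c \<le> r x" for c x
    unfolding m_def using that assms by (intro cINF_greatest) auto
  have "m (x + y) \<le> m x + m y" for x y
  proof -
    have "m (x + y) - r1 x \<le> r2 y" if r1: "r1 \<in> R" and r2: "r2 \<in> R" for r1 r2
    proof -
      obtain r where "r \<in> R" "r \<le> r1" "r \<le> r2" using chain[OF r1 r2] r1 r2 by auto
      then have "m (x + y) \<le> r x + r y" using m_le sublinear_add R order_trans by meson
      moreover have "r x + r y \<le> r1 x + r2 y"
        using \<open>r \<le> r1\<close> \<open>r \<le> r2\<close> by (simp add: le_fun_def add_mono)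
      ultimately show ?thesis by simp
    qed
    then have "m (x + y) - r1 x \<le> m y" if "r1 \<in> R" for r1 using that by (intro m_ge)
    then have "m (x + y) - m y \<le> m x" by (intro m_ge) (simp add: algebra_simps)
    then show ?thesis by simp
  qed
  moreover have "m (c *\<^sub>R x) = c * m x" if c: "0 < c" for c x
  proof -
    have scale: "r (c *\<^sub>R x) = c * r x" if "r \<in> R" for r
      using R[OF that] c unfolding sublinear_def by blast
    have "m (c *\<^sub>R x) / c \<le> m x"
    proof (rule m_ge)
      fix r assume "r \<in> R"
      then show "m (c *\<^sub>R x) / c \<le> r x"
        using m_le[of r "c *\<^sub>R x"] scale c by (simp add: divide_le_eq mult.commute)
    qed
    moreover have "c * m x \<le> m (c *\<^sub>R x)"
    proof (rule m_ge)
      fix r assume r: "r \<in> R"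
      have "c * m x \<le> c * r x" using m_le[OF r, of x] c by (simp add: mult_left_mono)
      then show "c * m x \<le> r (c *\<^sub>R x)" using scale[OF r] by simp
    qed
    ultimately show ?thesis using c by (simp add: divide_le_eq mult.commute)
  qed
  ultimately show ?thesis unfolding sublinear_def m_def by blast
qed

end

theorem hahn_banach_sublinear:
  fixes q :: "'a::real_vector \<Rightarrow> real"
  assumes q: "sublinear q"
  shows "\<exists>f. linear f \<and> f \<le> q"
proof -
  define \<Sigma> where "\<Sigma> = {r. sublinear r \<and> r \<le> q}"
  have "\<exists>r\<in>\<Sigma>. \<forall>r'\<in>\<Sigma>. r' \<le> r \<longrightarrow> r' = r"
  proof (rule predicate_Zorn)
    show "partial_order_on \<Sigma> (relation_of (\<lambda>r r'. r' \<le> r) \<Sigma>)"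
      by (rule partial_order_on_relation_ofI) auto
  next
    fix C assume C: "C \<in> Chains (relation_of (\<lambda>r r'. r' \<le> r) \<Sigma>)"
    then have "C \<subseteq> \<Sigma>" by (rule Chains_relation_of)
    show "\<exists>u\<in>\<Sigma>. \<forall>r\<in>C. u \<le> r"
    proof (cases "C = {}")
      case True
      then show ?thesis using q unfolding \<Sigma>_def by blast
    next
      case False
      have R: "sublinear r \<and> r \<le> q" if "r \<in> C" for r
        using that \<open>C \<subseteq> \<Sigma>\<close> unfolding \<Sigma>_def by blast
      have chain: "r \<le> s \<or> s \<le> r" if "r \<in> C" "s \<in> C" for r s
        using C that unfolding Chains_def relation_of_def by blast
      obtain r0 where "r0 \<in> C" using False by blast
      then have "(\<lambda>x. INF r\<in>C. r x) \<le> q"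
        using order_trans[OF INF_chain_le[OF q R chain]] R by blast
      then have "(\<lambda>x. INF r\<in>C. r x) \<in> \<Sigma>"
        using sublinear_INF_chain[OF q R chain False] unfolding \<Sigma>_def by blast
      then show ?thesis using INF_chain_le[OF q R chain] by blast
    qed
  qed
  then obtain r where r: "sublinear r" "r \<le> q" and min: "\<And>r'. r' \<in> \<Sigma> \<Longrightarrow> r' \<le> r \<Longrightarrow> r' = r"
    unfolding \<Sigma>_def by blast
  have "linear r"
  proof (rule minimal_sublinear_linear[OF r(1)])
    fix r' assume "sublinear r'" "r' \<le> r"
    then show "r' = r" using min[of r'] order_trans[OF \<open>r' \<le> r\<close> r(2)] unfolding \<Sigma>_def by blast
  qed
  then show ?thesis using r by blast
qed

lemma mazur_orlicz:
  assumes P: "sublinear P" and A: "convex A" "A \<noteq> {}" and lower: "\<And>a. a \<in> A \<Longrightarrow> \<alpha> \<le> P a"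
  shows "\<exists>f. linear f \<and> f \<le> P \<and> (\<forall>a\<in>A. \<alpha> \<le> f a)"
proof -
  let ?q = "mazur_orlicz_functional P A \<alpha>"
  have lower': "\<forall>a\<in>A. \<alpha> \<le> P a" using lower by blast
  note q_le = mazur_orlicz_functional_le[OF P lower']
  obtain f where f: "linear f" "f \<le> ?q"
    using hahn_banach_sublinear[OF sublinear_mazur_orlicz_functional[OF P lower' A]] by blast
  obtain a0 where "a0 \<in> A" using A(2) by blast
  have "f x \<le> P x" for x
    using le_funD[OF f(2), of x] q_le[OF \<open>a0 \<in> A\<close>, of 0 x] by simp
  moreover have "\<alpha> \<le> f a" if "a \<in> A" for a
  proof -
    have "f (- a) \<le> - \<alpha>"
      using le_funD[OF f(2), of "- a"] q_le[OF that, of 1 "- a"] sublinear_zero[OF P] by simp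
    then show ?thesis using linear_neg[OF f(1)] by simp
  qed
  ultimately show ?thesis using f(1) by (auto simp: le_fun_def)
qed

section \<open>Positive, order bounded and order continuous functionals\<close>

definition positive_functional :: "('a::vector_lattice \<Rightarrow> real) \<Rightarrow> bool" where
  "positive_functional \<phi> \<longleftrightarrow> (\<forall>x. 0 \<le> x \<longrightarrow> 0 \<le> \<phi> x)"

lemma positive_functionalD: "positive_functional \<phi> \<Longrightarrow> 0 \<le> x \<Longrightarrow> 0 \<le> \<phi> x"
  unfolding positive_functional_def by blast

lemma positive_functional_zero: "positive_functional (\<lambda>_. 0)"
  unfolding positive_functional_def by simp

context
  fixes \<phi> :: "'a::vector_lattice \<Rightarrow> real"
  assumes lin: "linear \<phi>" and pos: "positive_functional \<phi>"
begin

lemma positive_functional_mono: "x \<le> y \<Longrightarrow> \<phi> x \<le> \<phi> y"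
  using positive_functionalD[OF pos, of "y - x"] linear_diff[OF lin] by simp

lemma abs_le_positive_functional_vabs: "\<bar>\<phi> x\<bar> \<le> \<phi> (vabs x)"
  using positive_functional_mono[OF vabs_ge(1)] positive_functional_mono[OF vabs_ge(2)]
    linear_neg[OF lin] by (simp add: abs_le_iff)

lemma sublinear_positive_functional_vabs: "sublinear (\<lambda>x. \<phi> (vabs x))"
  unfolding sublinear_def
  using positive_functional_mono[OF vabs_triangle] linear_add[OF lin] linear_scale[OF lin]
  by (simp add: vabs_scaleR)

lemma fabs_positive_functional: "0 \<le> x \<Longrightarrow> fabs \<phi> x = \<phi> x"
  unfolding fabs_def
proof (rule cSup_eq_maximum)
  assume "0 \<le> x"
  then show "\<phi> x \<in> {\<phi> y |y. vabs y \<le> x}" using vabs_of_nonneg by force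
  fix z assume "z \<in> {\<phi> y |y. vabs y \<le> x}"
  then obtain y where "z = \<phi> y" "vabs y \<le> x" by blast
  then show "z \<le> \<phi> x"
    using abs_le_positive_functional_vabs[of y] positive_functional_mono[of "vabs y" x] by simp
qed

lemma fabs_le_positive_functional:
  assumes "\<And>y. \<bar>f y\<bar> \<le> \<phi> (vabs y)" and "0 \<le> x"
  shows "fabs f x \<le> \<phi> x"
  unfolding fabs_def
proof (rule cSup_least)
  have "vabs 0 \<le> x" using assms(2) by (simp add: vabs_def)
  then show "{f y |y. vabs y \<le> x} \<noteq> {}" by blast
  fix z assume "z \<in> {f y |y. vabs y \<le> x}"
  then obtain y where "z = f y" "vabs y \<le> x" by blast
  then show "z \<le> \<phi> x" using assms(1)[of y] positive_functional_mono[of "vabs y" x] by simp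
qed

lemma order_dual_positive_functional: "\<phi> \<in> order_dual"
proof -
  have "\<bar>\<phi> y\<bar> \<le> \<phi> a" if "vabs y \<le> a" for y a
    using abs_le_positive_functional_vabs[of y] positive_functional_mono[OF that] by simp
  then show ?thesis unfolding order_dual_def using lin by blast
qed

end

lemma down_to_zeroI:
  assumes "d0 \<in> D" and "\<And>a b. a \<in> D \<Longrightarrow> b \<in> D \<Longrightarrow> \<exists>c\<in>D. c \<le> a \<and> c \<le> b"
    and "\<And>d. d \<in> D \<Longrightarrow> 0 \<le> d" and "\<And>l. (\<And>d. d \<in> D \<Longrightarrow> l \<le> d) \<Longrightarrow> l \<le> 0"
  shows "down_to_zero D"
proof -
  have "\<forall>a\<in>D. 0 \<le> a" "\<forall>u. (\<forall>a\<in>D. u \<le> a) \<longrightarrow> u \<le> 0" using assms(3,4) by blast+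
  then have "is_glb D 0" unfolding is_glb_def by (intro conjI)
  moreover have "D \<noteq> {}" "\<forall>a\<in>D. \<forall>b\<in>D. \<exists>c\<in>D. c \<le> a \<and> c \<le> b" using assms(1,2) by blast+
  ultimately show ?thesis unfolding down_to_zero_def by (intro conjI)
qed

lemma down_to_zero_nonempty: "down_to_zero D \<Longrightarrow> \<exists>d. d \<in> D"
  unfolding down_to_zero_def by (elim conjE) blast

lemma down_to_zero_directed: "down_to_zero D \<Longrightarrow> a \<in> D \<Longrightarrow> b \<in> D \<Longrightarrow> \<exists>c\<in>D. c \<le> a \<and> c \<le> b"
  unfolding down_to_zero_def by (elim conjE) blast

lemma down_to_zero_nonneg: "down_to_zero D \<Longrightarrow> d \<in> D \<Longrightarrow> 0 \<le> d"
  unfolding down_to_zero_def is_glb_def by (elim conjE) (rule bspec)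

lemma down_to_zero_le_zero: "down_to_zero D \<Longrightarrow> (\<And>d. d \<in> D \<Longrightarrow> l \<le> d) \<Longrightarrow> l \<le> 0"
  unfolding down_to_zero_def is_glb_def by (metis (no_types))

lemma down_to_zero_inf:
  assumes D: "down_to_zero D" and "d0 \<in> D" and "0 \<le> y"
  shows "down_to_zero {inf y d | d. d \<in> D \<and> d \<le> d0}"
proof (rule down_to_zeroI)
  show "inf y d0 \<in> {inf y d | d. d \<in> D \<and> d \<le> d0}" using \<open>d0 \<in> D\<close> by blast
next
  fix a b assume "a \<in> {inf y d | d. d \<in> D \<and> d \<le> d0}" "b \<in> {inf y d | d. d \<in> D \<and> d \<le> d0}"
  then obtain da db where "a = inf y da" "da \<in> D" "da \<le> d0" "b = inf y db" "db \<in> D" by blast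
  moreover obtain c where "c \<in> D" "c \<le> da" "c \<le> db"
    using down_to_zero_directed[OF D \<open>da \<in> D\<close> \<open>db \<in> D\<close>] by blast
  ultimately show "\<exists>c\<in>{inf y d | d. d \<in> D \<and> d \<le> d0}. c \<le> a \<and> c \<le> b"
    by (intro bexI[of _ "inf y c"]) (auto intro: le_infI2)
next
  fix e assume "e \<in> {inf y d | d. d \<in> D \<and> d \<le> d0}"
  then show "0 \<le> e" using \<open>0 \<le> y\<close> down_to_zero_nonneg[OF D] by auto
next
  fix l assume lower: "\<And>e. e \<in> {inf y d | d. d \<in> D \<and> d \<le> d0} \<Longrightarrow> l \<le> e"
  show "l \<le> 0"
  proof (rule down_to_zero_le_zero[OF D])
    fix d assume "d \<in> D"
    then obtain c where "c \<in> D" "c \<le> d" "c \<le> d0" using down_to_zero_directed[OF D _ \<open>d0 \<in> D\<close>] by blast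
    then have "l \<le> inf y c" using lower by blast
    also have "\<dots> \<le> d" using \<open>c \<le> d\<close> by (auto intro: le_infI2)
    finally show "l \<le> d" .
  qed
qed

lemma order_dual_linear: "\<psi> \<in> order_dual \<Longrightarrow> linear \<psi>"
  unfolding order_dual_def by blast

lemma order_dual_bounded: "\<psi> \<in> order_dual \<Longrightarrow> 0 \<le> a \<Longrightarrow> \<exists>M. \<forall>y. vabs y \<le> a \<longrightarrow> \<bar>\<psi> y\<bar> \<le> M"
  unfolding order_dual_def by blast

lemma order_dual_uminus: "\<psi> \<in> order_dual \<Longrightarrow> (\<lambda>x. - \<psi> x) \<in> order_dual"
  unfolding order_dual_def by (simp add: linear_compose_neg)

lemma oc_dual_order_dual: "\<psi> \<in> oc_dual \<Longrightarrow> \<psi> \<in> order_dual"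
  unfolding oc_dual_def by blast

lemma oc_dual_linear: "\<psi> \<in> oc_dual \<Longrightarrow> linear \<psi>"
  by (intro order_dual_linear oc_dual_order_dual)

lemma oc_dualD: "\<psi> \<in> oc_dual \<Longrightarrow> down_to_zero D \<Longrightarrow> 0 < \<epsilon> \<Longrightarrow> \<exists>d\<in>D. \<bar>\<psi> d\<bar> < \<epsilon>"
  unfolding oc_dual_def by blast

lemma oc_dual_uminus: "\<psi> \<in> oc_dual \<Longrightarrow> (\<lambda>x. - \<psi> x) \<in> oc_dual"
  unfolding oc_dual_def using order_dual_uminus by fastforce

lemma fabs_upper: "\<psi> \<in> order_dual \<Longrightarrow> vabs y \<le> x \<Longrightarrow> \<psi> y \<le> fabs \<psi> x"
  unfolding fabs_def
proof (rule cSup_upper)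
  assume od: "\<psi> \<in> order_dual" and y: "vabs y \<le> x"
  then obtain M where M: "\<And>y. vabs y \<le> x \<Longrightarrow> \<bar>\<psi> y\<bar> \<le> M"
    using order_dual_bounded[OF od order_trans[OF vabs_nonneg y]] by blast
  have "\<psi> z \<le> M" if "vabs z \<le> x" for z
    using M[OF that] by simp
  then show "bdd_above {\<psi> y |y. vabs y \<le> x}" by (intro bdd_aboveI[of _ M]) auto
  show "\<psi> y \<in> {\<psi> y |y. vabs y \<le> x}" using y by blast
qed

section \<open>The modulus of an order continuous functional\<close>

text \<open>The positive part \<open>\<psi>\<^sup>+\<close> of \<open>\<psi>\<close>, on the positive cone (Riesz--Kantorovich).\<close>

definition fpos :: "('a::vector_lattice \<Rightarrow> real) \<Rightarrow> 'a \<Rightarrow> real" where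
  "fpos \<psi> x = Sup {\<psi> y | y. 0 \<le> y \<and> y \<le> x}"

lemma fpos_least: "0 \<le> x \<Longrightarrow> (\<And>y. 0 \<le> y \<Longrightarrow> y \<le> x \<Longrightarrow> \<psi> y \<le> c) \<Longrightarrow> fpos \<psi> x \<le> c"
  unfolding fpos_def by (rule cSup_least) auto

lemma fpos_approx: "0 \<le> x \<Longrightarrow> 0 < \<delta> \<Longrightarrow> \<exists>y. 0 \<le> y \<and> y \<le> x \<and> fpos \<psi> x - \<delta> < \<psi> y"
  using fpos_least[of x \<psi> "fpos \<psi> x - \<delta>"] by force

context
  fixes \<psi> :: "'a::vector_lattice \<Rightarrow> real"
  assumes od: "\<psi> \<in> order_dual"
begin

lemma fpos_upper: "0 \<le> y \<Longrightarrow> y \<le> x \<Longrightarrow> \<psi> y \<le> fpos \<psi> x"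
  unfolding fpos_def
proof (rule cSup_upper)
  assume y: "0 \<le> y" "y \<le> x"
  then obtain M where M: "\<And>y. vabs y \<le> x \<Longrightarrow> \<bar>\<psi> y\<bar> \<le> M"
    using order_dual_bounded[OF od] by (metis order_trans)
  have "\<psi> z \<le> M" if "0 \<le> z" "z \<le> x" for z
    using M[of z] that by (simp add: vabs_of_nonneg)
  then show "bdd_above {\<psi> y |y. 0 \<le> y \<and> y \<le> x}" by (intro bdd_aboveI[of _ M]) auto
  show "\<psi> y \<in> {\<psi> y |y. 0 \<le> y \<and> y \<le> x}" using y by blast
qed

lemma fpos_nonneg: "0 \<le> x \<Longrightarrow> 0 \<le> fpos \<psi> x"
  using fpos_upper[of 0 x] linear_0[OF order_dual_linear[OF od]] by simp

lemma fpos_ge: "0 \<le> x \<Longrightarrow> \<psi> x \<le> fpos \<psi> x"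
  using fpos_upper by simp

lemma fpos_mono: "0 \<le> x \<Longrightarrow> x \<le> x' \<Longrightarrow> fpos \<psi> x \<le> fpos \<psi> x'"
  by (rule fpos_least) (auto intro: fpos_upper order_trans)

lemma fpos_add:
  assumes a: "0 \<le> a" and b: "0 \<le> b"
  shows "fpos \<psi> (a + b) = fpos \<psi> a + fpos \<psi> b"
proof (rule antisym)
  have lin: "linear \<psi>" using order_dual_linear[OF od] .
  show "fpos \<psi> (a + b) \<le> fpos \<psi> a + fpos \<psi> b"
  proof (rule fpos_least)
    show "0 \<le> a + b" using a b by simp
  next
    fix y assume y: "0 \<le> y" "y \<le> a + b"
    have "\<psi> y = \<psi> (inf y a) + \<psi> (y - inf y a)" using linear_diff[OF lin, of y "inf y a"] by simp
    also have "\<psi> (inf y a) \<le> fpos \<psi> a" using a y by (intro fpos_upper) auto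
    also have "\<psi> (y - inf y a) \<le> fpos \<psi> b"
    proof (rule fpos_upper)
      show "0 \<le> y - inf y a" by (simp only: diff_ge_0_iff_ge) (rule inf_le1)
      show "y - inf y a \<le> b" using y(2) b by (rule riesz_decomposition)
    qed
    finally show "\<psi> y \<le> fpos \<psi> a + fpos \<psi> b" by simp
  qed
  have "fpos \<psi> a \<le> fpos \<psi> (a + b) - fpos \<psi> b"
  proof (rule fpos_least[OF a])
    fix y1 assume y1: "0 \<le> y1" "y1 \<le> a"
    have "fpos \<psi> b \<le> fpos \<psi> (a + b) - \<psi> y1"
    proof (rule fpos_least[OF b])
      fix y2 assume y2: "0 \<le> y2" "y2 \<le> b"
      have "\<psi> (y1 + y2) \<le> fpos \<psi> (a + b)" using y1 y2 by (intro fpos_upper) (auto intro: add_mono)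
      then show "\<psi> y2 \<le> fpos \<psi> (a + b) - \<psi> y1" using linear_add[OF lin] by simp
    qed
    then show "\<psi> y1 \<le> fpos \<psi> (a + b) - fpos \<psi> b" by simp
  qed
  then show "fpos \<psi> a + fpos \<psi> b \<le> fpos \<psi> (a + b)" by simp
qed

lemma fpos_scaleR:
  assumes c: "0 \<le> c" and x: "0 \<le> x"
  shows "fpos \<psi> (c *\<^sub>R x) = c * fpos \<psi> x"
proof (cases "c = 0")
  case True
  have "fpos \<psi> 0 \<le> 0"
    by (rule fpos_least) (auto simp: linear_0[OF order_dual_linear[OF od]] dest: antisym)
  then show ?thesis using True fpos_nonneg[of 0] by simp
next
  case False
  with c have c: "0 < c" by simp
  have lin: "linear \<psi>" using order_dual_linear[OF od] .
  have "fpos \<psi> (c *\<^sub>R x) \<le> c * fpos \<psi> x"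
  proof (rule fpos_least)
    show "0 \<le> c *\<^sub>R x" using c x by (simp add: scaleR_nonneg_nonneg)
  next
    fix y assume y: "0 \<le> y" "y \<le> c *\<^sub>R x"
    have "inverse c *\<^sub>R y \<le> inverse c *\<^sub>R (c *\<^sub>R x)" using y c by (intro scaleR_left_mono) auto
    moreover have "0 \<le> inverse c *\<^sub>R y" using y c by (simp add: scaleR_nonneg_nonneg)
    ultimately have "\<psi> (inverse c *\<^sub>R y) \<le> fpos \<psi> x" using c by (intro fpos_upper) auto
    then show "\<psi> y \<le> c * fpos \<psi> x" using c linear_scale[OF lin] by (simp add: field_simps)
  qed
  moreover have "fpos \<psi> x \<le> fpos \<psi> (c *\<^sub>R x) / c"
  proof (rule fpos_least[OF x])
    fix y assume y: "0 \<le> y" "y \<le> x"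
    have "\<psi> (c *\<^sub>R y) \<le> fpos \<psi> (c *\<^sub>R x)"
      using y c by (intro fpos_upper) (auto simp: scaleR_left_mono scaleR_nonneg_nonneg)
    then show "\<psi> y \<le> fpos \<psi> (c *\<^sub>R x) / c" using c linear_scale[OF lin] by (simp add: field_simps)
  qed
  ultimately show ?thesis using c by (simp add: field_simps)
qed

end

lemma oc_dual_fpos_small:
  assumes oc: "\<psi> \<in> oc_dual" and D: "down_to_zero D" and "0 < \<epsilon>"
  shows "\<exists>d\<in>D. fpos \<psi> d < \<epsilon>"
proof (rule ccontr)
  assume "\<not> ?thesis"
  then have large: "\<And>d. d \<in> D \<Longrightarrow> \<epsilon> \<le> fpos \<psi> d" by force
  have od: "\<psi> \<in> order_dual" and lin: "linear \<psi>" using oc by (simp_all add: oc_dual_order_dual oc_dual_linear)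
  define \<delta> where "\<delta> = \<epsilon> / 4"
  have \<delta>: "0 < \<delta>" using \<open>0 < \<epsilon>\<close> unfolding \<delta>_def by simp
  obtain d0 where d0: "d0 \<in> D" using down_to_zero_nonempty[OF D] by blast
  obtain y0 where y0: "0 \<le> y0" "y0 \<le> d0" "fpos \<psi> d0 - \<delta> < \<psi> y0"
    using fpos_approx[OF down_to_zero_nonneg[OF D d0] \<delta>] by blast
  obtain d1 where d1: "d1 \<in> D" "d1 \<le> d0" "\<bar>\<psi> (inf y0 d1)\<bar> < \<delta>"
    using oc_dualD[OF oc down_to_zero_inf[OF D d0 y0(1)] \<delta>] by blast
  obtain w where w: "0 \<le> w" "w \<le> d1" "fpos \<psi> d1 - \<delta> < \<psi> w"
    using fpos_approx[OF down_to_zero_nonneg[OF D d1(1)] \<delta>] by blast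
  \<comment> \<open>replacing the part \<open>inf y0 d1\<close> of \<open>y0\<close> below \<open>d1\<close> by \<open>w\<close> gains almost \<open>fpos \<psi> d1 \<ge> \<epsilon>\<close>\<close>
  define y where "y = (y0 - inf y0 d1) + w"
  have "y0 - inf y0 d1 \<le> d0 - d1"
    using riesz_decomposition[of y0 d1 "d0 - d1"] y0 d1 w by simp
  then have "y \<le> d0" unfolding y_def using add_mono[OF _ w(2)] by fastforce
  moreover have "0 \<le> y0 - inf y0 d1" by (simp only: diff_ge_0_iff_ge) (rule inf_le1)
  then have "0 \<le> y" unfolding y_def using w(1) by (rule add_nonneg_nonneg)
  ultimately have "\<psi> y \<le> fpos \<psi> d0" by (intro fpos_upper[OF od])
  moreover have "\<psi> y = \<psi> y0 - \<psi> (inf y0 d1) + \<psi> w"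
    unfolding y_def linear_add[OF lin] linear_diff[OF lin] ..
  ultimately have "\<psi> y0 - \<psi> (inf y0 d1) + \<psi> w \<le> fpos \<psi> d0" by simp
  then show False using y0(3) w(3) d1(3) large[OF d1(1)] unfolding \<delta>_def by linarith
qed

definition cone_extension :: "('a::vector_lattice \<Rightarrow> real) \<Rightarrow> 'a \<Rightarrow> real" where
  "cone_extension g x = g (sup x 0) - g (sup (- x) 0)"

context
  fixes g :: "'a::vector_lattice \<Rightarrow> real"
  assumes add: "\<And>a b. 0 \<le> a \<Longrightarrow> 0 \<le> b \<Longrightarrow> g (a + b) = g a + g b"
begin

lemma cone_extension_diff:
  assumes a: "0 \<le> a" and b: "0 \<le> b"
  shows "cone_extension g (a - b) = g a - g b"
proof -
  define p n where "p = sup (a - b) 0" and "n = sup (- (a - b)) 0"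
  have "p - n = a - b" unfolding p_def n_def by (rule pos_minus_neg_part)
  then have "g (p + b) = g (a + n)" by (simp add: algebra_simps)
  moreover have "0 \<le> p" "0 \<le> n" unfolding p_def n_def by simp_all
  ultimately have "g p + g b = g a + g n" using add[of p b] add[of a n] a b by simp
  then show ?thesis unfolding cone_extension_def p_def[symmetric] n_def[symmetric] by simp
qed

lemma cone_extension_nonneg: "0 \<le> x \<Longrightarrow> cone_extension g x = g x"
  using cone_extension_diff[of x 0] add[of 0 0] by simp

lemma linear_cone_extension:
  assumes hom: "\<And>c a. 0 \<le> c \<Longrightarrow> 0 \<le> a \<Longrightarrow> g (c *\<^sub>R a) = c * g a"
  shows "linear (cone_extension g)"
proof (rule linearI)
  fix x y :: 'a
  define px nx py ny where "px = sup x 0" and "nx = sup (- x) 0" and "py = sup y 0" and "ny = sup (- y) 0"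
  have nonneg: "0 \<le> px" "0 \<le> nx" "0 \<le> py" "0 \<le> ny" unfolding px_def nx_def py_def ny_def by simp_all
  have "x = px - nx" "y = py - ny" unfolding px_def nx_def py_def ny_def
    by (rule pos_minus_neg_part[symmetric])+
  then have "x + y = (px + py) - (nx + ny)" by (simp add: algebra_simps)
  then have "cone_extension g (x + y) = g (px + py) - g (nx + ny)"
    using cone_extension_diff[of "px + py" "nx + ny"] nonneg by simp
  also have "\<dots> = (g px - g nx) + (g py - g ny)" using add nonneg by simp
  finally show "cone_extension g (x + y) = cone_extension g x + cone_extension g y"
    unfolding cone_extension_def px_def nx_def py_def ny_def .
next
  fix c :: real and x :: 'a
  define px nx where "px = sup x 0" and "nx = sup (- x) 0"
  have nonneg: "0 \<le> px" "0 \<le> nx" unfolding px_def nx_def by simp_all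
  have "x = px - nx" unfolding px_def nx_def by (rule pos_minus_neg_part[symmetric])
  then have x: "c *\<^sub>R x = c *\<^sub>R px - c *\<^sub>R nx" by (simp add: scaleR_diff_right)
  have "cone_extension g (c *\<^sub>R x) = c * (g px - g nx)"
  proof (cases "0 \<le> c")
    case True
    have "cone_extension g (c *\<^sub>R x) = g (c *\<^sub>R px) - g (c *\<^sub>R nx)"
      unfolding x by (rule cone_extension_diff) (use True nonneg in \<open>simp_all add: scaleR_nonneg_nonneg\<close>)
    then show ?thesis using hom[OF True nonneg(1)] hom[OF True nonneg(2)] by (simp add: right_diff_distrib)
  next
    case False
    then have c: "0 \<le> - c" by simp
    have cx: "c *\<^sub>R x = (- c) *\<^sub>R nx - (- c) *\<^sub>R px" unfolding x by (simp add: algebra_simps)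
    have "cone_extension g (c *\<^sub>R x) = g ((- c) *\<^sub>R nx) - g ((- c) *\<^sub>R px)"
      unfolding cx by (rule cone_extension_diff; rule scaleR_nonneg_nonneg[OF c]; fact)
    then show ?thesis using hom[OF c nonneg(1)] hom[OF c nonneg(2)] by (simp add: right_diff_distrib)
  qed
  moreover have "cone_extension g x = g px - g nx" unfolding cone_extension_def px_def nx_def ..
  ultimately show "cone_extension g (c *\<^sub>R x) = c *\<^sub>R cone_extension g x" by simp
qed

end

lemma fpos_add_fpos_uminus_le_fabs:
  assumes od: "\<psi> \<in> order_dual" and x: "0 \<le> x"
  shows "fpos \<psi> x + fpos (\<lambda>x. - \<psi> x) x \<le> fabs \<psi> x"
proof -
  \<comment> \<open>\<open>\<psi> y1 - \<psi> y2 = \<psi> (y1 - y2)\<close> and \<open>vabs (y1 - y2) \<le> x\<close> for \<open>0 \<le> y1, y2 \<le> x\<close>\<close>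
  have "fpos \<psi> x \<le> fabs \<psi> x - fpos (\<lambda>x. - \<psi> x) x"
  proof (rule fpos_least[OF x])
    fix y1 assume y1: "0 \<le> y1" "y1 \<le> x"
    have "fpos (\<lambda>x. - \<psi> x) x \<le> fabs \<psi> x - \<psi> y1"
    proof (rule fpos_least[OF x])
      fix y2 assume y2: "0 \<le> y2" "y2 \<le> x"
      have "y1 - y2 \<le> x" "- (y1 - y2) \<le> x"
        using y1 y2 by (auto intro: order_trans[of _ y1] order_trans[of _ y2])
      then have "\<psi> (y1 - y2) \<le> fabs \<psi> x" by (intro fabs_upper[OF od]) (simp add: vabs_le_iff)
      then show "- \<psi> y2 \<le> fabs \<psi> x - \<psi> y1"
        using linear_diff[OF order_dual_linear[OF od]] by simp
    qed
    then show "\<psi> y1 \<le> fabs \<psi> x - fpos (\<lambda>x. - \<psi> x) x" by simp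
  qed
  then show ?thesis by simp
qed

lemma oc_dual_modulus:
  assumes oc: "\<psi> \<in> oc_dual"
  obtains \<phi> where "\<phi> \<in> oc_dual" "positive_functional \<phi>" "\<And>x. 0 \<le> x \<Longrightarrow> \<bar>\<psi> x\<bar> \<le> \<phi> x"
    "\<And>x. 0 \<le> x \<Longrightarrow> fabs \<phi> x \<le> fabs \<psi> x"
proof -
  define \<psi>' where "\<psi>' = (\<lambda>x. - \<psi> x)"
  have oc': "\<psi>' \<in> oc_dual" unfolding \<psi>'_def using oc_dual_uminus[OF oc] .
  have od: "\<psi> \<in> order_dual" "\<psi>' \<in> order_dual" using oc oc' by (simp_all add: oc_dual_order_dual)
  \<comment> \<open>\<open>\<phi>\<close> is the modulus \<open>\<psi>\<^sup>+ + (-\<psi>)\<^sup>+\<close>\<close>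
  define g where "g x = fpos \<psi> x + fpos \<psi>' x" for x
  have add: "g (a + b) = g a + g b" if "0 \<le> a" "0 \<le> b" for a b
    unfolding g_def using fpos_add[OF od(1) that] fpos_add[OF od(2) that] by simp
  have hom: "g (c *\<^sub>R a) = c * g a" if "0 \<le> c" "0 \<le> a" for c a
    unfolding g_def using fpos_scaleR[OF od(1) that] fpos_scaleR[OF od(2) that] by (simp add: algebra_simps)
  have g_nonneg: "0 \<le> g x" if "0 \<le> x" for x
    unfolding g_def using fpos_nonneg[OF od(1) that] fpos_nonneg[OF od(2) that] by simp
  define \<phi> where "\<phi> = cone_extension g"
  have lin: "linear \<phi>" unfolding \<phi>_def using add hom by (rule linear_cone_extension)
  have \<phi>: "\<phi> x = g x" if "0 \<le> x" for x unfolding \<phi>_def using add that by (rule cone_extension_nonneg)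
  have pos: "positive_functional \<phi>" unfolding positive_functional_def using \<phi> g_nonneg by simp
  have "\<bar>\<psi> x\<bar> \<le> \<phi> x" if "0 \<le> x" for x
    using fpos_ge[OF od(1) that] fpos_ge[OF od(2) that] fpos_nonneg[OF od(1) that]
      fpos_nonneg[OF od(2) that] \<phi>[OF that] unfolding g_def \<psi>'_def by linarith
  moreover have "fabs \<phi> x \<le> fabs \<psi> x" if x: "0 \<le> x" for x
    using fpos_add_fpos_uminus_le_fabs[OF od(1) x] fabs_positive_functional[OF lin pos x] \<phi>[OF x]
    unfolding g_def \<psi>'_def by simp
  moreover have "\<phi> \<in> oc_dual"
    unfolding oc_dual_def
  proof (intro CollectI conjI allI impI ballI)
    show "\<phi> \<in> order_dual" using lin pos by (rule order_dual_positive_functional)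
  next
    fix D :: "'a set" and \<epsilon> :: real assume D: "down_to_zero D" and "0 < \<epsilon>"
    then obtain d1 d2 where "d1 \<in> D" "fpos \<psi> d1 < \<epsilon> / 2" "d2 \<in> D" "fpos \<psi>' d2 < \<epsilon> / 2"
      using oc_dual_fpos_small[OF oc D] oc_dual_fpos_small[OF oc' D] by (metis half_gt_zero)
    moreover obtain c where c: "c \<in> D" "c \<le> d1" "c \<le> d2"
      using down_to_zero_directed[OF D \<open>d1 \<in> D\<close> \<open>d2 \<in> D\<close>] by blast
    moreover have "0 \<le> c" using down_to_zero_nonneg[OF D c(1)] .
    ultimately have "\<bar>\<phi> c\<bar> < \<epsilon>"
      using fpos_mono[OF od(1), of c d1] fpos_mono[OF od(2), of c d2] \<phi> g_nonneg
      unfolding g_def by fastforce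
    then show "\<exists>d\<in>D. \<bar>\<phi> d\<bar> < \<epsilon>" using c(1) by blast
  qed
  ultimately show ?thesis using that pos by blast
qed

section \<open>Ideals of the order continuous dual\<close>

lemma ideal_of_oc_dual_subset: "ideal_of_oc_dual I \<Longrightarrow> \<phi> \<in> I \<Longrightarrow> \<phi> \<in> oc_dual"
  unfolding ideal_of_oc_dual_def by (elim conjE) (rule subsetD)

lemma ideal_of_oc_dual_zero: "ideal_of_oc_dual I \<Longrightarrow> (\<lambda>_. 0) \<in> I"
  unfolding ideal_of_oc_dual_def by (elim conjE)

lemma ideal_of_oc_dual_solid:
  assumes "ideal_of_oc_dual I" "\<psi> \<in> I" "\<phi> \<in> oc_dual" "\<And>x. 0 \<le> x \<Longrightarrow> fabs \<phi> x \<le> fabs \<psi> x"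
  shows "\<phi> \<in> I"
proof -
  have "\<forall>\<psi>\<in>I. \<forall>\<phi>\<in>oc_dual. (\<forall>x. 0 \<le> x \<longrightarrow> fabs \<phi> x \<le> fabs \<psi> x) \<longrightarrow> \<phi> \<in> I"
    using assms(1) unfolding ideal_of_oc_dual_def by (elim conjE)
  then show ?thesis using assms(2-4) by blast
qed

lemma ideal_of_oc_dual_sum:
  assumes I: "ideal_of_oc_dual I" and "finite K" and "\<And>k. k \<in> K \<Longrightarrow> f k \<in> I \<and> positive_functional (f k)"
  shows "(\<lambda>y. \<Sum>k\<in>K. f k y) \<in> I \<and> positive_functional (\<lambda>y. \<Sum>k\<in>K. f k y)"
  using assms(2,3)
proof (induction K rule: finite_induct)
  case empty
  then show ?case using ideal_of_oc_dual_zero[OF I] positive_functional_zero by simp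
next
  case (insert a K)
  have add: "\<forall>\<phi>\<in>I. \<forall>\<psi>\<in>I. (\<lambda>x. \<phi> x + \<psi> x) \<in> I"
    using I unfolding ideal_of_oc_dual_def by (elim conjE)
  have a: "f a \<in> I" "positive_functional (f a)" using insert.prems by simp_all
  have K: "(\<lambda>y. \<Sum>k\<in>K. f k y) \<in> I" "positive_functional (\<lambda>y. \<Sum>k\<in>K. f k y)"
    using insert.IH insert.prems by simp_all
  have "(\<lambda>y. f a y + (\<Sum>k\<in>K. f k y)) \<in> I" using bspec[OF bspec[OF add a(1)] K(1)] by simp
  moreover have "positive_functional (\<lambda>y. f a y + (\<Sum>k\<in>K. f k y))"
    using a(2) K(2) unfolding positive_functional_def by (simp add: add_nonneg_nonneg)
  ultimately show ?case using insert.hyps by simp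
qed

lemma ideal_of_oc_dual_dominating:
  assumes I: "ideal_of_oc_dual I" and "\<psi> \<in> I"
  obtains \<phi> where "\<phi> \<in> I" "positive_functional \<phi>" "\<And>x. 0 \<le> x \<Longrightarrow> \<bar>\<psi> x\<bar> \<le> \<phi> x"
proof -
  obtain \<phi> where \<phi>: "\<phi> \<in> oc_dual" "positive_functional \<phi>" "\<And>x. 0 \<le> x \<Longrightarrow> \<bar>\<psi> x\<bar> \<le> \<phi> x"
    "\<And>x. 0 \<le> x \<Longrightarrow> fabs \<phi> x \<le> fabs \<psi> x"
    using oc_dual_modulus[OF ideal_of_oc_dual_subset[OF assms]] by blast
  have "\<phi> \<in> I" using ideal_of_oc_dual_solid[OF assms \<phi>(1) \<phi>(4)] .
  then show ?thesis using that \<phi>(2,3) by blast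
qed

lemma ideal_of_oc_dual_dominated:
  assumes I: "ideal_of_oc_dual I" and \<phi>: "\<phi> \<in> I" "positive_functional \<phi>"
    and f: "linear f" "\<And>y. \<bar>f y\<bar> \<le> \<phi> (vabs y)"
  shows "f \<in> I"
proof -
  have oc: "\<phi> \<in> oc_dual" using ideal_of_oc_dual_subset[OF I \<phi>(1)] .
  have lin: "linear \<phi>" using oc_dual_linear[OF oc] .
  have "f \<in> oc_dual"
    unfolding oc_dual_def
  proof (intro CollectI conjI allI impI ballI)
    have "\<bar>f y\<bar> \<le> \<phi> a" if "vabs y \<le> a" for y a
      using f(2)[of y] positive_functional_mono[OF lin \<phi>(2) that] by simp
    then show "f \<in> order_dual" unfolding order_dual_def using f(1) by blast
  next
    fix D :: "'a set" and \<delta> :: real assume D: "down_to_zero D" and "0 < \<delta>"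
    then obtain d where "d \<in> D" "\<bar>\<phi> d\<bar> < \<delta>" using oc_dualD[OF oc] by blast
    moreover have "\<bar>f d\<bar> \<le> \<phi> d"
      using f(2)[of d] vabs_of_nonneg[OF down_to_zero_nonneg[OF D \<open>d \<in> D\<close>]] by simp
    ultimately show "\<exists>d\<in>D. \<bar>f d\<bar> < \<delta>" by force
  qed
  moreover have "fabs f y \<le> fabs \<phi> y" if "0 \<le> y" for y
    using fabs_le_positive_functional[OF lin \<phi>(2) f(2) that] fabs_positive_functional[OF lin \<phi>(2) that]
    by simp
  ultimately show ?thesis using ideal_of_oc_dual_solid[OF I \<phi>(1)] by blast
qed

text \<open>By Mazur--Orlicz, a functional separating \<open>x\<close> from \<open>S\<close> can be chosen dominated by
  \<open>\<lambda>y. \<phi> (vabs y)\<close>, and then it belongs to \<open>I\<close>.\<close>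

lemma convex_weak_closure_approx:
  assumes I: "ideal_of_oc_dual I" and S: "convex S" and x: "x \<in> weak_closure I S"
    and \<phi>: "\<phi> \<in> I" "positive_functional \<phi>" and "0 < \<epsilon>"
  shows "\<exists>s\<in>S. \<phi> (vabs (s - x)) < \<epsilon>"
proof (rule ccontr)
  assume "\<not> ?thesis"
  then have far: "\<And>s. s \<in> S \<Longrightarrow> \<epsilon> \<le> \<phi> (vabs (s - x))" by force
  have lin: "linear \<phi>" using oc_dual_linear[OF ideal_of_oc_dual_subset[OF I \<phi>(1)]] .
  have near: "\<exists>s\<in>S. \<forall>f\<in>F. \<bar>f s - f x\<bar> < \<delta>" if "finite F" "F \<subseteq> I" "0 < \<delta>" for F \<delta>
  proof -
    have "\<forall>F. finite F \<and> F \<subseteq> I \<longrightarrow> (\<forall>\<delta>>0. \<exists>s\<in>S. \<forall>f\<in>F. \<bar>f s - f x\<bar> < \<delta>)"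
      using x unfolding weak_closure_def by simp
    then show ?thesis using that by simp
  qed
  have "S \<noteq> {}" using near[of "{}" 1] by auto
  define A where "A = (\<lambda>s. s - x) ` S"
  have A: "convex A" "A \<noteq> {}" unfolding A_def using convex_translation_subtract[OF S] \<open>S \<noteq> {}\<close> by auto
  have "\<epsilon> \<le> \<phi> (vabs a)" if "a \<in> A" for a using that far unfolding A_def by auto
  then obtain f where f: "linear f" "f \<le> (\<lambda>y. \<phi> (vabs y))" "\<forall>a\<in>A. \<epsilon> \<le> f a"
    using mazur_orlicz[OF sublinear_positive_functional_vabs[OF lin \<phi>(2)] A] by blast
  have "\<bar>f y\<bar> \<le> \<phi> (vabs y)" for y
    using le_funD[OF f(2), of y] le_funD[OF f(2), of "- y"] linear_neg[OF f(1), of y]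
    by (simp add: vabs_minus)
  then have "f \<in> I" by (rule ideal_of_oc_dual_dominated[OF I \<phi> f(1)])
  then obtain s where "s \<in> S" "\<bar>f s - f x\<bar> < \<epsilon>" using near[of "{f}" \<epsilon>] \<open>0 < \<epsilon>\<close> by auto
  moreover have "\<epsilon> \<le> f (s - x)" using f(3) \<open>s \<in> S\<close> unfolding A_def by blast
  ultimately show False using linear_diff[OF f(1)] by simp
qed

section \<open>Carriers\<close>

text \<open>For positive \<open>\<phi>\<close>, the positive cone of the carrier \<open>C\<^sub>\<phi> = N\<^sub>\<phi>\<^sup>d\<close>, where
  \<open>N\<^sub>\<phi> = {x. \<phi> (vabs x) = 0}\<close>.\<close>

definition carrier_cone :: "('a::vector_lattice \<Rightarrow> real) \<Rightarrow> 'a set" where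
  "carrier_cone \<phi> = {y. 0 \<le> y \<and> (\<forall>b. 0 \<le> b \<longrightarrow> \<phi> b = 0 \<longrightarrow> inf b y = 0)}"

lemma carrier_cone_downward:
  assumes "g \<in> carrier_cone \<phi>" "0 \<le> y" "y \<le> g"
  shows "y \<in> carrier_cone \<phi>"
proof -
  have "inf b y = 0" if "0 \<le> b" "\<phi> b = 0" for b
  proof (rule antisym)
    have "inf b y \<le> inf b g" using assms(3) by (simp add: le_infI2)
    also have "inf b g = 0" using assms(1) that unfolding carrier_cone_def by blast
    finally show "inf b y \<le> 0" .
  qed (use that assms(2) in simp)
  then show ?thesis using assms(2) unfolding carrier_cone_def by blast
qed

lemma carrier_cone_scaleR_of_nat: "y \<in> carrier_cone \<phi> \<Longrightarrow> of_nat k *\<^sub>R y \<in> carrier_cone \<phi>"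
  unfolding carrier_cone_def by (simp add: disjoint_scaleR_of_nat scaleR_nonneg_nonneg)

lemma is_lub_if_gaps_have_multiples:
  assumes r: "0 \<le> r" and G: "0 \<in> G" "\<And>g. g \<in> G \<Longrightarrow> g \<le> r"
    and gap: "\<And>t. 0 \<le> t \<Longrightarrow> t \<le> r \<Longrightarrow> t \<noteq> 0 \<Longrightarrow>
      \<exists>h. 0 \<le> h \<and> h \<le> t \<and> h \<noteq> 0 \<and> (\<forall>k::nat. of_nat k *\<^sub>R h \<le> r \<longrightarrow> of_nat k *\<^sub>R h \<in> G)"
  shows "is_lub G r"
  unfolding is_lub_def
proof (intro conjI ballI allI impI)
  fix u assume u: "\<forall>g\<in>G. g \<le> u"
  define t where "t = r - inf u r"
  have "0 \<le> u" using u G(1) by blast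
  then have "0 \<le> inf u r" using r by simp
  then have t: "0 \<le> t" "t \<le> r" unfolding t_def by (simp_all only: diff_ge_0_iff_ge inf_le2) simp
  \<comment> \<open>otherwise all multiples of some nonzero \<open>h\<close> stay below \<open>r\<close> (Archimedean property)\<close>
  have "t = 0"
  proof (rule ccontr)
    assume "t \<noteq> 0"
    then obtain h where h: "0 \<le> h" "h \<le> t" "h \<noteq> 0"
      and mult: "\<And>k::nat. of_nat k *\<^sub>R h \<le> r \<Longrightarrow> of_nat k *\<^sub>R h \<in> G"
      using gap[OF t] by blast
    have "of_nat k *\<^sub>R h \<le> r" for k
    proof (induction k)
      case (Suc k)
      then have "of_nat k *\<^sub>R h \<le> inf u r" using u mult by simp
      also have "\<dots> = r - t" unfolding t_def by simp
      also have "\<dots> \<le> r - h" using h(2) by simp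
      finally show ?case by (simp add: algebra_simps le_diff_eq)
    qed (simp add: r)
    then show False using nonneg_zero_if_multiples_bounded[OF h(1)] h(3) by blast
  qed
  then show "r \<le> u" unfolding t_def by (metis eq_iff_diff_eq_0 inf.cobounded1)
qed (use G in blast)

lemma down_to_zero_diff_is_lub:
  assumes lub: "is_lub G r" and "g0 \<in> G" and directed: "\<And>a b. a \<in> G \<Longrightarrow> b \<in> G \<Longrightarrow> \<exists>c\<in>G. a \<le> c \<and> b \<le> c"
  shows "down_to_zero {r - g | g. g \<in> G}"
proof (rule down_to_zeroI)
  show "r - g0 \<in> {r - g | g. g \<in> G}" using \<open>g0 \<in> G\<close> by blast
next
  fix a b assume "a \<in> {r - g | g. g \<in> G}" "b \<in> {r - g | g. g \<in> G}"
  then obtain ga gb where "a = r - ga" "b = r - gb" "ga \<in> G" "gb \<in> G" by blast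
  moreover obtain c where "c \<in> G" "ga \<le> c" "gb \<le> c" using directed \<open>ga \<in> G\<close> \<open>gb \<in> G\<close> by blast
  ultimately show "\<exists>c\<in>{r - g | g. g \<in> G}. c \<le> a \<and> c \<le> b"
    by (intro bexI[of _ "r - c"]) auto
next
  fix d assume "d \<in> {r - g | g. g \<in> G}"
  then show "0 \<le> d" using lub unfolding is_lub_def by auto
next
  fix l assume "\<And>d. d \<in> {r - g | g. g \<in> G} \<Longrightarrow> l \<le> d"
  then have "\<forall>g\<in>G. g \<le> r - l" by (fastforce simp: le_diff_eq add.commute)
  then have "r \<le> r - l" using lub unfolding is_lub_def by blast
  then show "l \<le> 0" by simp
qed

text \<open>Such an \<open>r\<close> is the supremum of the elements below it on which \<open>\<phi>\<close> vanishes, so order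
  continuity forces \<open>\<phi> r = 0\<close>.\<close>

lemma oc_dual_vanishes_if_disjoint_carrier:
  assumes oc: "\<phi> \<in> oc_dual" and pos: "positive_functional \<phi>" and r: "0 \<le> r"
    and disjoint: "\<And>g. g \<in> carrier_cone \<phi> \<Longrightarrow> inf r g = 0"
  shows "\<phi> r = 0"
proof -
  have lin: "linear \<phi>" using oc_dual_linear[OF oc] .
  define G where "G = {h. 0 \<le> h \<and> h \<le> r \<and> \<phi> h = 0}"
  have "0 \<in> G" unfolding G_def using r linear_0[OF lin] by simp
  have lub: "is_lub G r"
  proof (rule is_lub_if_gaps_have_multiples[OF r \<open>0 \<in> G\<close>])
    fix t assume t: "0 \<le> t" "t \<le> r" "t \<noteq> 0"
    have "inf r t = t" using t(2) by (rule inf_absorb2)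
    then have "t \<notin> carrier_cone \<phi>" using disjoint[of t] t(3) by auto
    then obtain b where b: "0 \<le> b" "\<phi> b = 0" "inf b t \<noteq> 0"
      using t(1) unfolding carrier_cone_def by blast
    define h where "h = inf b t"
    have "0 \<le> \<phi> h" "\<phi> h \<le> \<phi> b" unfolding h_def
      using b(1) t(1) positive_functionalD[OF pos] positive_functional_mono[OF lin pos] by simp_all
    then have "\<phi> (of_nat k *\<^sub>R h) = 0" for k :: nat using b(2) linear_scale[OF lin] by simp
    moreover have "0 \<le> h" unfolding h_def using b(1) t(1) by simp
    ultimately show "\<exists>h. 0 \<le> h \<and> h \<le> t \<and> h \<noteq> 0 \<and> (\<forall>k::nat. of_nat k *\<^sub>R h \<le> r \<longrightarrow> of_nat k *\<^sub>R h \<in> G)"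
      using b(3) unfolding G_def h_def by (intro exI[of _ "inf b t"]) (auto simp: scaleR_nonneg_nonneg)
  qed (simp add: G_def)
  have directed: "\<exists>c\<in>G. a \<le> c \<and> b \<le> c" if "a \<in> G" "b \<in> G" for a b
  proof -
    have ab: "0 \<le> a" "0 \<le> b" "a \<le> r" "b \<le> r" "\<phi> a = 0" "\<phi> b = 0" using that unfolding G_def by auto
    have "\<phi> (sup a b) \<le> \<phi> (a + b)"
      by (rule positive_functional_mono[OF lin pos sup_le_add_nonneg[OF ab(1,2)]])
    also have "\<dots> = 0" using linear_add[OF lin] ab(5,6) by simp
    finally have "\<phi> (sup a b) = 0" using positive_functionalD[OF pos, of "sup a b"] ab(1) by (simp add: le_supI1)
    then show ?thesis using ab unfolding G_def by (intro bexI[of _ "sup a b"]) (auto simp: le_supI1)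
  qed
  have D: "down_to_zero {r - g | g. g \<in> G}" using lub \<open>0 \<in> G\<close> directed by (rule down_to_zero_diff_is_lub)
  have "\<bar>\<phi> r\<bar> < \<epsilon>" if \<epsilon>: "0 < \<epsilon>" for \<epsilon>
  proof -
    obtain g where "g \<in> G" "\<bar>\<phi> (r - g)\<bar> < \<epsilon>" using oc_dualD[OF oc D \<epsilon>] by blast
    then show ?thesis using linear_diff[OF lin, of r g] unfolding G_def by simp
  qed
  then show ?thesis by (metis zero_less_abs_iff less_irrefl)
qed

lemma separating_ideal_carrier_piece:
  assumes I: "ideal_of_oc_dual I" and sep: "separates_points I" and r: "0 \<le> r" "r \<noteq> 0"
  obtains \<phi> y where "\<phi> \<in> I" "positive_functional \<phi>" "y \<in> carrier_cone \<phi>" "y \<le> r" "y \<noteq> 0"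
proof -
  obtain \<psi> where "\<psi> \<in> I" "\<psi> r \<noteq> 0" using sep r(2) unfolding separates_points_def by blast
  moreover obtain \<phi> where \<phi>: "\<phi> \<in> I" "positive_functional \<phi>" "\<And>x. 0 \<le> x \<Longrightarrow> \<bar>\<psi> x\<bar> \<le> \<phi> x"
    using ideal_of_oc_dual_dominating[OF I \<open>\<psi> \<in> I\<close>] by blast
  ultimately have "\<phi> r \<noteq> 0" using r(1) by force
  then obtain g where g: "g \<in> carrier_cone \<phi>" "inf r g \<noteq> 0"
    using oc_dual_vanishes_if_disjoint_carrier[OF ideal_of_oc_dual_subset[OF I \<phi>(1)] \<phi>(2) r(1)] by blast
  have "inf r g \<in> carrier_cone \<phi>"
    by (rule carrier_cone_downward[OF g(1)]) (use r(1) g(1) in \<open>auto simp: carrier_cone_def\<close>)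
  then show ?thesis using that[OF \<phi>(1,2)] g(2) by simp
qed

lemma disjoint_is_lub:
  assumes lub: "is_lub B a" and "0 \<le> a" and B: "\<And>b. b \<in> B \<Longrightarrow> 0 \<le> b"
    and "0 \<le> v" and disjoint: "\<And>b. b \<in> B \<Longrightarrow> inf v b = 0"
  shows "inf v a = 0"
proof -
  define c where "c = inf v a"
  have "0 \<le> c" unfolding c_def using assms by simp
  have "b \<le> a - c" if "b \<in> B" for b
  proof -
    have "inf b c \<le> inf v b" unfolding c_def by (simp add: le_infI2 inf.coboundedI2)
    then have "inf b c = 0" using disjoint[OF that] B[OF that] \<open>0 \<le> c\<close> by (simp add: antisym)
    then have "b + c = sup b c" by (rule disjoint_add_eq_sup)
    also have "\<dots> \<le> a" using lub that unfolding c_def is_lub_def by simp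
    finally show ?thesis by (simp add: le_diff_eq)
  qed
  then have "a \<le> a - c" using lub unfolding is_lub_def by blast
  then have "c \<le> 0" by simp
  then show ?thesis using \<open>0 \<le> c\<close> unfolding c_def by (rule antisym)
qed

lemma is_lub_carrier_pieces:
  assumes I: "ideal_of_oc_dual I" and sep: "separates_points I" and a: "0 \<le> a"
  shows "is_lub {y. y \<le> a \<and> (\<exists>\<phi>\<in>I. positive_functional \<phi> \<and> y \<in> carrier_cone \<phi>)} a"
    (is "is_lub ?A a")
proof (rule is_lub_if_gaps_have_multiples[OF a])
  show "0 \<in> ?A"
    using a ideal_of_oc_dual_zero[OF I] positive_functional_zero
    by (auto simp: carrier_cone_def inf_absorb2)
next
  fix t assume "0 \<le> t" "t \<le> a" "t \<noteq> 0"
  then obtain \<phi> y where \<phi>: "\<phi> \<in> I" "positive_functional \<phi>"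
    and y: "y \<in> carrier_cone \<phi>" "y \<le> t" "y \<noteq> 0"
    using separating_ideal_carrier_piece[OF I sep] by metis
  have "0 \<le> y" using y(1) by (simp add: carrier_cone_def)
  moreover have "of_nat k *\<^sub>R y \<in> ?A" if "of_nat k *\<^sub>R y \<le> a" for k :: nat
    using that carrier_cone_scaleR_of_nat[OF y(1)] \<phi> by blast
  ultimately show "\<exists>h. 0 \<le> h \<and> h \<le> t \<and> h \<noteq> 0 \<and> (\<forall>k::nat. of_nat k *\<^sub>R h \<le> a \<longrightarrow> of_nat k *\<^sub>R h \<in> ?A)"
    using y(2,3) by blast
qed simp

lemma countable_carrier_cover:
  assumes I: "ideal_of_oc_dual I" and sep: "separates_points I"
    and csp: "countable_sup_property TYPE('a)" and a: "0 \<le> (a::'a::vector_lattice)"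
  shows "\<exists>\<Phi>::nat \<Rightarrow> 'a \<Rightarrow> real. (\<forall>j. \<Phi> j \<in> I \<and> positive_functional (\<Phi> j)) \<and>
           (\<forall>v. 0 \<le> v \<longrightarrow> (\<forall>j. \<Phi> j v = 0) \<longrightarrow> inf v a = 0)"
proof -
  define A where "A = {y. y \<le> a \<and> (\<exists>\<phi>\<in>I. positive_functional \<phi> \<and> y \<in> carrier_cone \<phi>)}"
  have "0 \<in> A" unfolding A_def using a ideal_of_oc_dual_zero[OF I] positive_functional_zero
    by (auto simp: carrier_cone_def inf_absorb2)
  have "is_lub A a" unfolding A_def using I sep a by (rule is_lub_carrier_pieces)
  then obtain B where B: "B \<subseteq> A" "countable B" "is_lub B a"
    using csp unfolding countable_sup_property_def by blast
  \<comment> \<open>\<open>B\<close> may be empty, and \<open>from_nat_into\<close> only enumerates nonempty sets\<close>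
  define B' where "B' = insert 0 B"
  have B': "B' \<subseteq> A" "countable B'" "is_lub B' a" "B' \<noteq> {}"
    using B a \<open>0 \<in> A\<close> unfolding B'_def is_lub_def by auto
  have "\<forall>b\<in>B'. \<exists>\<phi>. \<phi> \<in> I \<and> positive_functional \<phi> \<and> b \<in> carrier_cone \<phi>"
    using B'(1) unfolding A_def by blast
  then obtain ch where ch: "\<And>b. b \<in> B' \<Longrightarrow> ch b \<in> I \<and> positive_functional (ch b) \<and> b \<in> carrier_cone (ch b)"
    by metis
  define \<Phi> where "\<Phi> j = ch (from_nat_into B' j)" for j
  have "\<forall>j. \<Phi> j \<in> I \<and> positive_functional (\<Phi> j)"
    unfolding \<Phi>_def using ch from_nat_into[OF B'(4)] by blast
  moreover have "inf v a = 0" if v: "0 \<le> v" "\<forall>j. \<Phi> j v = 0" for v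
  proof (rule disjoint_is_lub[OF B'(3) a _ v(1)])
    fix b assume "b \<in> B'"
    then show "0 \<le> b" using ch carrier_cone_def by blast
    obtain j where "from_nat_into B' j = b" using from_nat_into_surj[OF B'(2) \<open>b \<in> B'\<close>] by blast
    then have "ch b v = 0" using v(2) unfolding \<Phi>_def by blast
    then show "inf v b = 0" using ch[OF \<open>b \<in> B'\<close>] v(1) unfolding carrier_cone_def by blast
  qed
  ultimately show ?thesis by blast
qed

section \<open>Unbounded order convergence\<close>

definition tail_bounds :: "(nat \<Rightarrow> 'a::vector_lattice) \<Rightarrow> 'a set" where
  "tail_bounds u = {d. \<exists>N. \<forall>n\<ge>N. u n \<le> d}"

lemma sum_power_half: "(\<Sum>n\<in>{N..<N+M}. (1/2::real)^n) = 2 * (1/2)^N - 2 * (1/2)^(N+M)"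
proof (induction M)
  case (Suc M)
  have "{N..<N + Suc M} = insert (N + M) {N..<N+M}" by auto
  then show ?case using Suc by simp
qed simp

context
  fixes u :: "nat \<Rightarrow> 'a::vector_lattice" and w :: 'a
  assumes nonneg: "\<And>n. 0 \<le> u n" and bounded: "\<And>n. u n \<le> w"
begin

lemma tail_bounds_nonneg: "d \<in> tail_bounds u \<Longrightarrow> 0 \<le> d"
proof -
  assume "d \<in> tail_bounds u"
  then obtain N where "u N \<le> d" unfolding tail_bounds_def by blast
  then show "0 \<le> d" using order_trans[OF nonneg[of N]] by blast
qed

lemma tail_bounds_shift_zero:
  assumes "0 \<le> h" and shift: "\<And>d. d \<in> tail_bounds u \<Longrightarrow> d - h \<in> tail_bounds u"
  shows "h = 0"
proof (rule nonneg_zero_if_multiples_bounded[OF \<open>0 \<le> h\<close>])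
  fix k :: nat
  have "w - of_nat k *\<^sub>R h \<in> tail_bounds u"
  proof (induction k)
    case 0
    show ?case using bounded unfolding tail_bounds_def by simp
  next
    case (Suc k)
    from shift[OF Suc.IH] show ?case by (simp add: algebra_simps)
  qed
  then show "of_nat k *\<^sub>R h \<le> w" using tail_bounds_nonneg by fastforce
qed

lemma order_conv_zeroI:
  assumes zero: "\<And>v. 0 \<le> v \<Longrightarrow> (\<And>d. d \<in> tail_bounds u \<Longrightarrow> v \<le> d) \<Longrightarrow> v = 0"
  shows "order_conv u 0"
  unfolding order_conv_def
proof (intro exI conjI)
  show "down_to_zero (tail_bounds u)"
  proof (rule down_to_zeroI)
    show "w \<in> tail_bounds u" using bounded unfolding tail_bounds_def by blast
  next
    fix a b assume "a \<in> tail_bounds u" "b \<in> tail_bounds u"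
    then obtain Na Nb where "\<forall>n\<ge>Na. u n \<le> a" "\<forall>n\<ge>Nb. u n \<le> b" unfolding tail_bounds_def by blast
    then have "inf a b \<in> tail_bounds u" unfolding tail_bounds_def by (intro CollectI exI[of _ "max Na Nb"]) simp
    then show "\<exists>c\<in>tail_bounds u. c \<le> a \<and> c \<le> b" by (intro bexI[of _ "inf a b"]) auto
  next
    fix d assume "d \<in> tail_bounds u"
    then show "0 \<le> d" by (rule tail_bounds_nonneg)
  next
    fix l assume "\<And>d. d \<in> tail_bounds u \<Longrightarrow> l \<le> d"
    then have "sup l 0 = 0" using tail_bounds_nonneg by (intro zero) simp_all
    then show "l \<le> 0" by (metis sup.cobounded1)
  qed
  show "\<forall>d\<in>tail_bounds u. \<exists>N. \<forall>n\<ge>N. vabs (u n - 0) \<le> d"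
    unfolding tail_bounds_def using vabs_of_nonneg[OF nonneg] by simp
qed

context
  fixes v :: 'a
  assumes "0 \<le> v" and lower: "\<And>d. d \<in> tail_bounds u \<Longrightarrow> v \<le> d"
begin

lemma tail_lower_bound_zero_if_disjoint:
  assumes disjoint: "\<And>n. inf v (u n) = 0"
  shows "v = 0"
proof (rule tail_bounds_shift_zero[OF \<open>0 \<le> v\<close>])
  fix d assume d: "d \<in> tail_bounds u"
  then obtain N where N: "\<forall>n\<ge>N. u n \<le> d" unfolding tail_bounds_def by blast
  have "u n \<le> d - v" if "N \<le> n" for n
  proof -
    have "u n + v = sup (u n) v" using disjoint[of n] by (simp add: disjoint_add_eq_sup inf_commute)
    also have "\<dots> \<le> d" using N that lower[OF d] by simp
    finally show ?thesis by (simp add: le_diff_eq)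
  qed
  then show "d - v \<in> tail_bounds u" unfolding tail_bounds_def by blast
qed

lemma down_to_zero_tail_remainders:
  "down_to_zero (range (\<lambda>M. sup (v - (\<Sum>n\<in>{N..<N+M}. u n)) 0))"
proof -
  define T where "T M = sup (v - (\<Sum>n\<in>{N..<N+M}. u n)) 0" for M
  have antimono: "T M' \<le> T M" if "M \<le> M'" for M M'
  proof -
    have "(\<Sum>n\<in>{N..<N+M}. u n) \<le> (\<Sum>n\<in>{N..<N+M'}. u n)"
      using that nonneg by (intro sum_mono2) auto
    then show ?thesis unfolding T_def by (intro sup_mono) simp_all
  qed
  have "down_to_zero (range T)"
  proof (rule down_to_zeroI)
    show "T 0 \<in> range T" by simp
  next
    fix a b assume "a \<in> range T" "b \<in> range T"
    then obtain ma mb where "a = T ma" "b = T mb" by blast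
    then show "\<exists>c\<in>range T. c \<le> a \<and> c \<le> b"
      using antimono[of ma "max ma mb"] antimono[of mb "max ma mb"] by auto
  next
    fix d assume "d \<in> range T"
    then show "0 \<le> d" unfolding T_def by auto
  next
    fix l assume "\<And>d. d \<in> range T \<Longrightarrow> l \<le> d"
    define h where "h = sup l 0"
    then have h: "h \<le> T M" for M using \<open>\<And>d. d \<in> range T \<Longrightarrow> l \<le> d\<close> unfolding T_def by simp
    have "h = 0"
    proof (rule tail_bounds_shift_zero)
      fix d assume "d \<in> tail_bounds u"
      then obtain Nd where Nd: "\<forall>n\<ge>Nd. u n \<le> d" unfolding tail_bounds_def by blast
      have "u n \<le> d - h" if n: "max N Nd \<le> n" for n
      proof -
        have "u n \<le> (\<Sum>n\<in>{N..<N + (n + 1 - N)}. u n)"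
          using n nonneg sum_mono2[of "{N..<N + (n + 1 - N)}" "{n}" u] by auto
        then have "T (n + 1 - N) \<le> sup (d - u n) 0"
          unfolding T_def using lower[OF \<open>d \<in> tail_bounds u\<close>] by (intro sup_mono diff_mono) simp_all
        also have "\<dots> = d - u n" using Nd n by (simp add: sup_absorb1)
        finally have "h \<le> d - u n" using h[of "n + 1 - N"] by (rule order_trans[rotated])
        then show ?thesis by (simp add: le_diff_eq add.commute)
      qed
      then show "d - h \<in> tail_bounds u" unfolding tail_bounds_def by blast
    qed (simp add: h_def)
    then show "l \<le> 0" unfolding h_def by (metis sup.cobounded1)
  qed
  then show ?thesis unfolding T_def .
qed

lemma oc_dual_tail_lower_bound_null:
  assumes oc: "\<phi> \<in> oc_dual" and pos: "positive_functional \<phi>"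
    and small: "\<And>n. K \<le> n \<Longrightarrow> \<phi> (u n) \<le> (1/2)^n"
  shows "\<phi> v = 0"
proof -
  have lin: "linear \<phi>" using oc_dual_linear[OF oc] .
  have bound: "\<phi> v \<le> 2 * (1/2)^N" if "K \<le> N" for N
  proof (rule field_le_epsilon)
    fix \<epsilon> :: real assume "0 < \<epsilon>"
    then obtain M where M: "\<bar>\<phi> (sup (v - (\<Sum>n\<in>{N..<N+M}. u n)) 0)\<bar> < \<epsilon>"
      using oc_dualD[OF oc down_to_zero_tail_remainders] by blast
    define R where "R = sup (v - (\<Sum>n\<in>{N..<N+M}. u n)) 0"
    have "v - (\<Sum>n\<in>{N..<N+M}. u n) \<le> R" unfolding R_def by simp
    then have "v \<le> R + (\<Sum>n\<in>{N..<N+M}. u n)" by (simp only: diff_le_eq)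
    then have "\<phi> v \<le> \<phi> (R + (\<Sum>n\<in>{N..<N+M}. u n))" by (rule positive_functional_mono[OF lin pos])
    also have "\<dots> = \<phi> R + (\<Sum>n\<in>{N..<N+M}. \<phi> (u n))"
      using linear_add[OF lin] linear_sum[OF lin] by simp
    also have "(\<Sum>n\<in>{N..<N+M}. \<phi> (u n)) \<le> (\<Sum>n\<in>{N..<N+M}. (1/2::real)^n)"
      using small that by (intro sum_mono) simp
    also have "\<dots> \<le> 2 * (1/2)^N" unfolding sum_power_half by simp
    finally show "\<phi> v \<le> 2 * (1/2)^N + \<epsilon>" using M unfolding R_def by simp
  qed
  have "\<phi> v \<le> 0"
  proof (rule ccontr)
    assume "\<not> \<phi> v \<le> 0"
    then obtain N where N: "(1/2::real)^N < \<phi> v / 2" using real_arch_pow_inv[of "\<phi> v / 2" "1/2"] by auto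
    have "(1/2::real)^(max N K) \<le> (1/2)^N" by (rule power_decreasing) auto
    with N bound[of "max N K"] show False by simp
  qed
  then show ?thesis using positive_functionalD[OF pos \<open>0 \<le> v\<close>] by simp
qed

end

end

text \<open>A lower bound of the tails of \<open>inf (vabs (s n - x)) (vabs y)\<close> is annihilated by every
  \<open>\<Phi> k j\<close>, hence disjoint from every \<open>vabs (s k - x)\<close>, hence zero.\<close>

lemma uo_conv_of_carrier_cover:
  fixes s :: "nat \<Rightarrow> 'a::vector_lattice"
  assumes \<Phi>: "\<And>k j. \<Phi> k j \<in> oc_dual" "\<And>k j. positive_functional (\<Phi> k j)"
    and cover: "\<And>k v. 0 \<le> v \<Longrightarrow> (\<And>j. \<Phi> k j v = 0) \<Longrightarrow> inf v (vabs (s k - x)) = 0"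
    and small: "\<And>n k j. k < n \<Longrightarrow> j < n \<Longrightarrow> \<Phi> k j (vabs (s n - x)) \<le> (1/2)^n"
  shows "uo_conv s x"
  unfolding uo_conv_def
proof
  fix y
  define u where "u n = inf (vabs (s n - x)) (vabs y)" for n
  have u: "0 \<le> u n" "u n \<le> vabs y" for n unfolding u_def by (simp_all add: vabs_nonneg)
  show "order_conv (\<lambda>n. inf (vabs (s n - x)) (vabs y)) 0"
    unfolding u_def[symmetric]
  proof (rule order_conv_zeroI[OF u])
    fix v assume v: "0 \<le> v" "\<And>d. d \<in> tail_bounds u \<Longrightarrow> v \<le> d"
    have "inf v (u k) = 0" for k
    proof -
      have "\<Phi> k j v = 0" for j
      proof (rule oc_dual_tail_lower_bound_null[OF u v \<Phi>(1,2), where K = "Suc (max k j)"])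
        fix n assume "Suc (max k j) \<le> n"
        have "u n \<le> vabs (s n - x)" unfolding u_def by simp
        then have "\<Phi> k j (u n) \<le> \<Phi> k j (vabs (s n - x))"
          by (rule positive_functional_mono[OF oc_dual_linear[OF \<Phi>(1)] \<Phi>(2)])
        also have "\<dots> \<le> (1/2)^n" using \<open>Suc (max k j) \<le> n\<close> by (intro small) auto
        finally show "\<Phi> k j (u n) \<le> (1/2)^n" .
      qed
      then have "inf v (vabs (s k - x)) = 0" using cover v(1) by blast
      moreover have "inf v (u k) \<le> inf v (vabs (s k - x))" unfolding u_def by (auto intro: le_infI2)
      ultimately have "inf v (u k) \<le> 0" by simp
      moreover have "0 \<le> inf v (u k)" using v(1) u(1) by simp
      ultimately show ?thesis by (rule antisym)
    qed
    then show "v = 0" using tail_lower_bound_zero_if_disjoint[of u "vabs y" v] u v by blast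
  qed
qed

lemma convex_weak_closure_sequence:
  assumes I: "ideal_of_oc_dual I" and S: "convex S" and x: "x \<in> weak_closure I S"
    and \<Psi>: "\<And>z j. \<Psi> z j \<in> I \<and> positive_functional (\<Psi> z j)"
  shows "\<exists>s. \<forall>n. s n \<in> S \<and> (\<forall>k<n. \<forall>j<n. \<Psi> (s k) j (vabs (s n - x)) < (1/2)^n)"
proof (rule dependent_wellorder_choice)
  fix n and s :: "nat \<Rightarrow> 'a"
  define F where "F y = (\<Sum>p\<in>{..<n} \<times> {..<n}. \<Psi> (s (fst p)) (snd p) y)" for y
  have F: "F \<in> I" "positive_functional F"
    unfolding F_def using ideal_of_oc_dual_sum[OF I, of "{..<n} \<times> {..<n}"] \<Psi> by auto
  moreover have "(0::real) < (1/2)^n" by simp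
  ultimately obtain r where "r \<in> S" and r: "F (vabs (r - x)) < (1/2)^n"
    using convex_weak_closure_approx[OF I S x] by blast
  have "\<Psi> (s k) j (vabs (r - x)) < (1/2)^n" if "(k, j) \<in> {..<n} \<times> {..<n}" for k j
  proof -
    have "0 \<le> \<Psi> z i (vabs (r - x))" for z i using \<Psi> positive_functionalD vabs_nonneg by blast
    then have "\<Psi> (s k) j (vabs (r - x)) \<le> F (vabs (r - x))"
      unfolding F_def using member_le_sum[OF that, of "\<lambda>p. \<Psi> (s (fst p)) (snd p) (vabs (r - x))"] by simp
    then show ?thesis using r by simp
  qed
  then show "\<exists>r. r \<in> S \<and> (\<forall>k<n. \<forall>j<n. \<Psi> (s k) j (vabs (r - x)) < (1/2)^n)"
    using \<open>r \<in> S\<close> by blast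
qed simp

theorem corollary5p14:
  fixes I :: "('a::vector_lattice \<Rightarrow> real) set" and S :: "'a set" and x :: 'a
  assumes "ideal_of_oc_dual I"
    and "separates_points I"
    and "countable_sup_property TYPE('a)"
    and "convex S"
    and "x \<in> weak_closure I S"
  shows "\<exists>u. (\<forall>n. u n \<in> S) \<and> uo_conv u x"
proof -
  note I = assms(1)
  obtain cover :: "'a \<Rightarrow> nat \<Rightarrow> 'a \<Rightarrow> real" where
    cover: "\<And>a. 0 \<le> a \<Longrightarrow> (\<forall>j. cover a j \<in> I \<and> positive_functional (cover a j)) \<and>
      (\<forall>v. 0 \<le> v \<longrightarrow> (\<forall>j. cover a j v = 0) \<longrightarrow> inf v a = 0)"
    using countable_carrier_cover[OF assms(1-3)] by metis
  define \<Psi> where "\<Psi> z = cover (vabs (z - x))" for z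
  have \<Psi>: "\<Psi> z j \<in> I \<and> positive_functional (\<Psi> z j)" for z j
    unfolding \<Psi>_def using cover[OF vabs_nonneg] by blast
  obtain s where s: "\<And>n. s n \<in> S"
    and small: "\<And>n k j. k < n \<Longrightarrow> j < n \<Longrightarrow> \<Psi> (s k) j (vabs (s n - x)) < (1/2)^n"
    using convex_weak_closure_sequence[where \<Psi> = \<Psi>, OF I assms(4,5) \<Psi>] by blast
  have "uo_conv s x"
  proof (rule uo_conv_of_carrier_cover)
    show "\<Psi> (s k) j \<in> oc_dual" "positive_functional (\<Psi> (s k) j)" for k j
      using \<Psi> ideal_of_oc_dual_subset[OF I] by blast+
    show "inf v (vabs (s k - x)) = 0" if "0 \<le> v" "\<And>j. \<Psi> (s k) j v = 0" for k v
      using cover[OF vabs_nonneg] that unfolding \<Psi>_def by blast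
  qed (use small in \<open>simp add: less_imp_le\<close>)
  then show ?thesis using s by blast
qed

end
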